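(* Let $c>1$ be a non-integral real number, let $L=\lfloor c\rfloor+1$ and let $m$ be a positive integer. For any $L$-tuple $h=(h_0,h_1,\ldots,h_{L-1})$ of integers which are not all $0$ and any positive integer $N$, we have \[\sum_{n=N}^{2N-1}e\Bigl(\frac1m\sum_{\ell=0}^{L-1}h_\ell (n+\ell)^c\Bigr)\ll_{L,c,m}\|h\|_\infty\,N^{1-\frac{\|c\|}{2^{(c+1)}}},\] as soon as $\|h\|_\infty=o\bigl(N^{1-\{c\}}\bigr)$ (that is: for $N$ and $h$ ranging so that $\|h\|_\infty/N^{1-\{c\}}\to 0$, the bound holds with an implied constant depending only on $L,c,m$).
   Context: $e(u)=\exp(2\pi i u)$. For $h\in\mathbb R^L$, $\|h\|_\infty=\max_i|h_i|$. For real $x$, $\{x\}=x-\lfloor x\rfloor$ is the fractional part and $\|x\|=\min\{\{x\},1-\{x\}\}$ is the distance from $x$ to the nearest integer. The exponent $2^{(c+1)}$ is the real power $2^{c+1}$. *)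

theory Defs
  imports "HOL-Analysis.Analysis"
begin

definition e :: "real \<Rightarrow> complex" where
  "e u = exp (2 * of_real pi * \<i> * of_real u)"

definition dist_int :: "real \<Rightarrow> real" where
  "dist_int x = min (frac x) (1 - frac x)"

definition sup_norm :: "nat \<Rightarrow> (nat \<Rightarrow> int) \<Rightarrow> real" where
  "sup_norm L h = (if L = 0 then 0 else real_of_int (Max ((\<lambda>l. \<bar>h l\<bar>) ` {..<L})))"

end

theory Submission
  imports Defs "HOL-Computational_Algebra.Polynomial"
begin

text \<open>Write \<open>F x = (1/m) \<Sum>l<L. h l * (x + l) powr c\<close> and let \<open>k0\<close> be the least order of a
  nonvanishing moment \<open>\<Sum>l<L. h l * l ^ k0\<close> (one exists since a Vandermonde matrix is invertible).
  Taylor expansion shows that the \<open>j\<close>-th derivative of \<open>F\<close> behaves like \<open>\<alpha>\<^sub>j x powr (c - j - k0)\<close>, so for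
  \<open>q = \<lfloor>c\<rfloor> - k0\<close> the \<open>(q + 1)\<close>-st derivative has exact order \<open>N powr (frac c - 1)\<close> (up to the size
  of \<open>h\<close>) and the \<open>(q + 2)\<close>-nd has constant sign on \<open>[N, 2N]\<close>. Applying the Weyl--van der Corput
  inequality \<open>q\<close> times, with shift ranges \<open>H\<^sub>j \<approx> N powr (2 ^ (j + 1) * \<eta>)\<close>, reduces the sum to sums
  of \<open>e\<close> of \<open>q\<close>-fold differences of \<open>F\<close>. Their consecutive phase differences are monotone and lie
  in \<open>[\<lambda>, 1 - \<lambda>]\<close> with \<open>\<lambda> \<approx> N powr (frac c - 1)\<close>, so the Kusmin--Landau inequality bounds them by
  \<open>O (N powr (1 - frac c))\<close>, and unwinding the iteration gives \<open>O (N powr (1 - \<eta>))\<close>. When the size of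
  \<open>h\<close> exceeds \<open>N powr \<eta>\<close>, the trivial bound \<open>N\<close> already suffices.\<close>

lemma e_conv_cis: "e x = cis (2 * pi * x)"
  by (simp add: e_def cis_conv_exp mult_ac)

lemma e_add: "e (x + y) = e x * e y"
  by (simp add: e_conv_cis cis_mult algebra_simps)

lemma norm_e [simp]: "norm (e x) = 1"
  by (simp add: e_conv_cis)

lemma cnj_e: "cnj (e x) = e (- x)"
  by (simp add: e_conv_cis cis_cnj)

lemma e_diff: "e (x - y) = e x * cnj (e y)"
  using e_add[of x "-y"] by (simp add: cnj_e)

lemma norm_sum_e_uminus: "norm (\<Sum>t\<in>A. e (- f t)) = norm (\<Sum>t\<in>A. e (f t))"
proof -
  have "(\<Sum>t\<in>A. e (- f t)) = cnj (\<Sum>t\<in>A. e (f t))"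
    by (simp add: cnj_e)
  then show ?thesis
    by (simp only: complex_mod_cnj)
qed

lemma norm_sum_e_le_card: "norm (\<Sum>x\<in>A. e (f x)) \<le> card A"
  using norm_sum[of "\<lambda>x. e (f x)" A] by simp

section \<open>The Kusmin--Landau inequality\<close>

lemma e_minus_one_mult_cot:
  assumes "sin (pi * d) \<noteq> 0"
  shows "(e d - 1) * (- (1/2) - \<i> / 2 * of_real (cot (pi * d))) = 1"
proof -
  define s c where "s = sin (pi * d)" and "c = cos (pi * d)"
  have ed: "e d = Complex (1 - 2 * s\<^sup>2) (2 * s * c)"
    using cos_double_sin[of "pi * d"] sin_double[of "pi * d"]
    by (simp add: e_conv_cis complex_eq_iff s_def c_def mult_ac)
  have sc: "c * c + s * s = 1"
    unfolding s_def c_def by (simp flip: power2_eq_square)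
  have "c * (c * (s * 2)) + s * (s * (s * 2)) = s * 2 * (c * c + s * s)"
    by (simp add: algebra_simps)
  then show ?thesis
    using assms sc unfolding ed cot_def s_def[symmetric] c_def[symmetric]
    by (simp add: complex_eq_iff field_simps power2_eq_square)
qed

lemma cot_antimono:
  assumes "0 < x" "x \<le> y" "y < pi"
  shows "cot y \<le> cot (x::real)"
proof -
  have sx: "sin x > 0" and sy: "sin y > 0"
    using assms by (auto intro!: sin_gt_zero)
  have "cot x - cot y = sin (y - x) / (sin x * sin y)"
    using sx sy by (simp add: cot_def sin_diff field_simps)
  moreover have "sin (y - x) \<ge> 0"
    using assms by (intro sin_ge_zero) auto
  ultimately have "cot x - cot y \<ge> 0"
    using sx sy by simp
  then show ?thesis
    by simp
qed

lemma abs_cot_pi_le: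
  fixes d \<delta> :: real
  assumes "0 < \<delta>" "\<delta> \<le> d" "d \<le> 1 - \<delta>"
  shows "\<bar>cot (pi * d)\<bar> \<le> 1 / (pi * \<delta>)"
proof (cases "d = 1/2")
  case True
  then have "cos (pi * d) = 0"
    by (metis cos_pi_half times_divide_eq_right mult_1_right)
  then show ?thesis
    using assms by (simp add: cot_def)
next
  case False
  \<comment> \<open>\<open>|tan t| \<ge> |t|\<close> for \<open>|t| < pi/2\<close>, applied to \<open>t = pi * d\<close> or \<open>t = pi * (d - 1)\<close>\<close>
  have "pi * \<delta> \<le> \<bar>tan (pi * d)\<bar>"
  proof (cases "d < 1/2")
    case True
    then have "\<bar>pi * d\<bar> \<le> \<bar>tan (pi * d)\<bar>"
      using assms by (intro abs_tan_ge) auto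
    then show ?thesis
      using assms by (smt (verit) mult_left_mono pi_ge_zero)
  next
    case d_gt: False
    have "tan (pi * d) = tan (pi * (d - 1))"
      using tan_periodic_pi[of "pi * (d - 1)"] by (simp add: algebra_simps)
    moreover have "\<bar>pi * (d - 1)\<bar> \<le> \<bar>tan (pi * (d - 1))\<bar>"
      using False d_gt assms by (intro abs_tan_ge) (auto simp: abs_if algebra_simps)
    moreover have "pi * \<delta> \<le> \<bar>pi * (d - 1)\<bar>"
      using assms mult_left_mono[of \<delta> "1 - d" pi] by (simp add: abs_if algebra_simps)
    ultimately show ?thesis
      by simp
  qed
  moreover have "pi * \<delta> > 0"
    using assms by simp
  ultimately show ?thesis
    by (simp add: cot_altdef divide_simps)
qed

lemma summation_by_parts_lessThan:
  fixes u w :: "nat \<Rightarrow> 'a::comm_ring"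
  shows "(\<Sum>n<Suc j. (u (n+1) - u n) * w n) =
         u (Suc j) * w j - u 0 * w 0 - (\<Sum>n<j. u (n+1) * (w (n+1) - w n))"
  by (induction j) (auto simp: algebra_simps)

lemma sum_abs_diff_monotone:
  fixes f :: "nat \<Rightarrow> real"
  assumes "(\<forall>n<j. f n \<le> f (n+1)) \<or> (\<forall>n<j. f (n+1) \<le> f n)"
  shows "(\<Sum>n<j. \<bar>f (n+1) - f n\<bar>) = \<bar>f j - f 0\<bar>"
  using assms
proof
  assume "\<forall>n<j. f n \<le> f (n+1)"
  then have "(\<Sum>n<j. \<bar>f (n+1) - f n\<bar>) = (\<Sum>n<j. f (n+1) - f n)"
    by (intro sum.cong) auto
  also have "\<dots> = f j - f 0"
    using sum_lessThan_telescope[of f j] by simp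
  finally show ?thesis
    by (metis abs_of_nonneg sum_nonneg abs_ge_zero)
next
  assume "\<forall>n<j. f (n+1) \<le> f n"
  then have "(\<Sum>n<j. \<bar>f (n+1) - f n\<bar>) = (\<Sum>n<j. f n - f (n+1))"
    by (intro sum.cong) auto
  also have "\<dots> = f 0 - f j"
    using sum_lessThan_telescope'[of f j] by simp
  finally show ?thesis
    by (metis abs_minus_commute abs_of_nonneg sum_nonneg abs_ge_zero)
qed

lemma e_eq_diff_mult_cot:
  assumes "sin (pi * (b - a)) \<noteq> 0"
  shows "e a = (e b - e a) * (- (1/2) - \<i> / 2 * of_real (cot (pi * (b - a))))"
proof -
  let ?w = "- (1/2) - \<i> / 2 * of_real (cot (pi * (b - a)))"
  have "e b = e a * e (b - a)"
    by (simp flip: e_add)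
  then have "(e b - e a) * ?w = e a * ((e (b - a) - 1) * ?w)"
    by (simp add: algebra_simps)
  then show ?thesis
    using e_minus_one_mult_cot[OF assms] by simp
qed

lemma norm_sum_e_le_cot_variation:
  fixes \<phi> :: "nat \<Rightarrow> real"
  defines "\<kappa> \<equiv> \<lambda>n. cot (pi * (\<phi> (n+1) - \<phi> n))"
  assumes sin_nz: "\<And>n. n \<le> j \<Longrightarrow> sin (pi * (\<phi> (n+1) - \<phi> n)) \<noteq> 0"
  shows "norm (\<Sum>n<Suc (Suc j). e (\<phi> n))
           \<le> 2 + (\<bar>\<kappa> 0\<bar> + \<bar>\<kappa> j\<bar> + (\<Sum>n<j. \<bar>\<kappa> (n+1) - \<kappa> n\<bar>)) / 2"
proof -
  define u where "u n = e (\<phi> n)" for n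
  define w where "w n = - (1/2) - \<i> / 2 * of_real (\<kappa> n)" for n
  have norm_w: "norm (w n) \<le> 1/2 + \<bar>\<kappa> n\<bar> / 2" for n
    using norm_triangle_ineq4[of "- (1/2)" "\<i> / 2 * of_real (\<kappa> n)"]
    by (simp add: w_def norm_mult norm_divide)
  have "w (n+1) - w n = - (\<i> / 2) * of_real (\<kappa> (n+1) - \<kappa> n)" for n
    by (simp add: w_def algebra_simps)
  then have norm_diff_w: "norm (u (n+1) * (w (n+1) - w n)) = \<bar>\<kappa> (n+1) - \<kappa> n\<bar> / 2" for n
    by (simp add: u_def norm_mult norm_divide flip: of_real_diff)
  have variation: "norm (\<Sum>n<j. u (n+1) * (w (n+1) - w n)) \<le> (\<Sum>n<j. \<bar>\<kappa> (n+1) - \<kappa> n\<bar>) / 2"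
    using norm_sum[of "\<lambda>n. u (n+1) * (w (n+1) - w n)" "{..<j}"]
    by (simp only: norm_diff_w sum_divide_distrib)
  \<comment> \<open>writing each term as a difference times \<open>w n\<close>, summation by parts leaves only the variation of \<open>w\<close>\<close>
  have "u n = (u (n+1) - u n) * w n" if "n \<le> j" for n
    using e_eq_diff_mult_cot[OF sin_nz[OF that]] by (simp add: u_def w_def \<kappa>_def)
  then have "(\<Sum>n<Suc (Suc j). u n) = (\<Sum>n<Suc j. (u (n+1) - u n) * w n) + u (Suc j)"
    by simp
  also have "\<dots> = u (Suc j) * w j - u 0 * w 0 - (\<Sum>n<j. u (n+1) * (w (n+1) - w n)) + u (Suc j)"
    by (simp only: summation_by_parts_lessThan)
  finally have sum_eq: "(\<Sum>n<Suc (Suc j). u n) =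
      u (Suc j) * w j - u 0 * w 0 - (\<Sum>n<j. u (n+1) * (w (n+1) - w n)) + u (Suc j)" .
  have "norm (\<Sum>n<Suc (Suc j). u n) \<le> norm (u (Suc j) * w j) + norm (u 0 * w 0)
      + norm (\<Sum>n<j. u (n+1) * (w (n+1) - w n)) + norm (u (Suc j))"
    unfolding sum_eq
    by (intro order.trans[OF norm_triangle_ineq] add_right_mono
        order.trans[OF norm_triangle_ineq4] add_mono order.refl)
  also have "\<dots> \<le> (1/2 + \<bar>\<kappa> j\<bar> / 2) + (1/2 + \<bar>\<kappa> 0\<bar> / 2)
      + (\<Sum>n<j. \<bar>\<kappa> (n+1) - \<kappa> n\<bar>) / 2 + 1"
    using norm_w[of 0] norm_w[of j] variation by (intro add_mono) (auto simp: u_def norm_mult)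
  finally show ?thesis
    by (simp add: u_def field_simps)
qed

lemma sum_abs_diff_cot_le:
  fixes d :: "nat \<Rightarrow> real"
  assumes \<delta>: "0 < \<delta>" and range: "\<And>n. n \<le> j \<Longrightarrow> \<delta> \<le> d n \<and> d n \<le> 1 - \<delta>"
    and mono: "(\<forall>n<j. d n \<le> d (n+1)) \<or> (\<forall>n<j. d (n+1) \<le> d n)"
  shows "(\<Sum>n<j. \<bar>cot (pi * d (n+1)) - cot (pi * d n)\<bar>) \<le> 2 / (pi * \<delta>)"
proof -
  define \<kappa> where "\<kappa> n = cot (pi * d n)" for n
  have antimono: "\<kappa> y \<le> \<kappa> x" if "x \<le> j" "y \<le> j" "d x \<le> d y" for x y
    unfolding \<kappa>_def using range[OF that(1)] range[OF that(2)] that(3) \<delta>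
    by (intro cot_antimono) auto
  have "(\<forall>n<j. \<kappa> n \<le> \<kappa> (n+1)) \<or> (\<forall>n<j. \<kappa> (n+1) \<le> \<kappa> n)"
    using mono antimono by (metis Suc_eq_plus1 Suc_leI less_imp_le)
  then have "(\<Sum>n<j. \<bar>\<kappa> (n+1) - \<kappa> n\<bar>) = \<bar>\<kappa> j - \<kappa> 0\<bar>"
    by (rule sum_abs_diff_monotone)
  also have "\<dots> \<le> \<bar>\<kappa> j\<bar> + \<bar>\<kappa> 0\<bar>"
    by (rule abs_triangle_ineq4)
  also have "\<dots> \<le> 1 / (pi * \<delta>) + 1 / (pi * \<delta>)"
    using abs_cot_pi_le[OF \<delta>] range[of 0] range[of j] by (intro add_mono) (auto simp: \<kappa>_def)
  finally show ?thesis
    by (simp add: \<kappa>_def)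
qed

theorem kusmin_landau:
  fixes \<phi> :: "nat \<Rightarrow> real" and \<delta> :: real
  assumes \<delta>: "0 < \<delta>" "\<delta> \<le> 1/2"
    and diff_range: "\<And>n. n + 1 < M \<Longrightarrow> \<delta> \<le> \<phi> (n+1) - \<phi> n \<and> \<phi> (n+1) - \<phi> n \<le> 1 - \<delta>"
    and diff_mono: "(\<forall>n. n + 2 < M \<longrightarrow> \<phi> (n+1) - \<phi> n \<le> \<phi> (n+2) - \<phi> (n+1)) \<or>
                    (\<forall>n. n + 2 < M \<longrightarrow> \<phi> (n+2) - \<phi> (n+1) \<le> \<phi> (n+1) - \<phi> n)"
  shows "norm (\<Sum>n<M. e (\<phi> n)) \<le> 2 / \<delta>"
proof (cases "M \<le> 1")
  case True
  then have "norm (\<Sum>n<M. e (\<phi> n)) \<le> 1"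
    using norm_sum[of "\<lambda>n. e (\<phi> n)" "{..<M}"] by simp
  also have "1 \<le> 2 / \<delta>"
    using \<delta> by (simp add: field_simps)
  finally show ?thesis .
next
  case False
  then obtain j where M: "M = Suc (Suc j)"
    by (metis One_nat_def Suc_pred not_le not_less_eq zero_less_Suc less_Suc_eq_0_disj)
  define d where "d n = \<phi> (n+1) - \<phi> n" for n
  define B where "B = 1 / (pi * \<delta>)"
  have d_range: "\<delta> \<le> d n \<and> d n \<le> 1 - \<delta>" if "n \<le> j" for n
    using diff_range[of n] that M by (simp add: d_def)
  have sin_nz: "sin (pi * d n) \<noteq> 0" if "n \<le> j" for n
    using d_range[OF that] \<delta> by (intro sin_gt_zero[THEN less_imp_neq, symmetric]) auto
  have cot_bound: "\<bar>cot (pi * d n)\<bar> \<le> B" if "n \<le> j" for n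
    using d_range[OF that] \<delta> unfolding B_def by (intro abs_cot_pi_le) auto
  have "(\<forall>n<j. d n \<le> d (n+1)) \<or> (\<forall>n<j. d (n+1) \<le> d n)"
    using diff_mono M by (simp add: d_def algebra_simps)
  then have variation: "(\<Sum>n<j. \<bar>cot (pi * d (n+1)) - cot (pi * d n)\<bar>) \<le> 2 * B"
    using sum_abs_diff_cot_le[OF \<delta>(1) d_range] by (simp add: B_def)
  have "norm (\<Sum>n<M. e (\<phi> n))
      \<le> 2 + (\<bar>cot (pi * d 0)\<bar> + \<bar>cot (pi * d j)\<bar> + (\<Sum>n<j. \<bar>cot (pi * d (n+1)) - cot (pi * d n)\<bar>)) / 2"
    unfolding M d_def
    by (rule norm_sum_e_le_cot_variation) (use sin_nz in \<open>simp add: d_def\<close>)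
  also have "\<dots> \<le> 2 + 2 * B"
    using cot_bound[OF le0] cot_bound[OF order_refl] variation by simp
  also have "\<dots> \<le> 2 / \<delta>"
  proof -
    have "2 * B \<le> 1 / \<delta>" "2 \<le> 1 / \<delta>"
      using \<delta> pi_gt3 by (simp_all add: B_def field_simps)
    then show ?thesis
      by simp
  qed
  finally show ?thesis .
qed

section \<open>The Weyl--van der Corput inequality\<close>

lemma sum_shift_supported_int:
  fixes f :: "int \<Rightarrow> 'a::comm_monoid_add"
  assumes "\<And>n. n \<notin> {a..<b} \<Longrightarrow> f n = 0" "p + k \<le> a" "b \<le> q + k"
  shows "(\<Sum>t\<in>{p..<q}. f (t + k)) = (\<Sum>n\<in>{a..<b}. f n)"
proof -
  have "(\<Sum>t\<in>{p..<q}. f (t + k)) = sum f ((\<lambda>t. t + k) ` {p..<q})"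
    by (subst sum.reindex) (auto simp: inj_on_def)
  also have "\<dots> = (\<Sum>n\<in>{a..<b}. f n)"
    using assms by (intro sum.mono_neutral_right) auto
  finally show ?thesis .
qed

lemma sum_symmetric_interval_int:
  fixes g :: "int \<Rightarrow> 'a::comm_semiring_1"
  assumes "\<And>d. g (- d) = g d" "H \<ge> 1"
  shows "(\<Sum>d\<in>{1-H..<H}. g d) = g 0 + 2 * (\<Sum>d\<in>{1..<H}. g d)"
proof -
  have split: "{1-H..<H} = uminus ` {1..<H} \<union> ({0} \<union> {1..<H})"
    using assms(2) by (auto simp: image_iff intro!: bexI[of _ "- _"])
  have "sum g (uminus ` {1..<H}) = (\<Sum>d\<in>{1..<H}. g d)"
    using assms(1) by (subst sum.reindex) (auto simp: inj_on_def)
  then show ?thesis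
    unfolding split by (subst sum.union_disjoint; auto simp: mult_2 ac_simps)+
qed

definition correlation :: "(int \<Rightarrow> complex) \<Rightarrow> int \<Rightarrow> int \<Rightarrow> int \<Rightarrow> complex" where
  "correlation z a b d = (\<Sum>n\<in>{a..<b}. z (n + d) * cnj (z n))"

context
  fixes z :: "int \<Rightarrow> complex" and a b :: int
  assumes supp: "\<And>n. n \<notin> {a..<b} \<Longrightarrow> z n = 0"
begin

lemma of_int_mult_sum_eq_sum_windows:
  assumes "H \<ge> 1"
  shows "of_int H * (\<Sum>n\<in>{a..<b}. z n) = (\<Sum>t\<in>{a-H+1..<b}. \<Sum>j\<in>{0..<H}. z (t + j))"
proof -
  have "(\<Sum>t\<in>{a-H+1..<b}. \<Sum>j\<in>{0..<H}. z (t + j)) = (\<Sum>j\<in>{0..<H}. \<Sum>t\<in>{a-H+1..<b}. z (t + j))"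
    by (rule sum.swap)
  also have "\<dots> = (\<Sum>j\<in>{0..<H}. \<Sum>n\<in>{a..<b}. z n)"
    using supp by (intro sum.cong refl sum_shift_supported_int) auto
  finally show ?thesis
    using assms by simp
qed

lemma sum_windows_products:
  assumes "j' \<in> {0..<H}"
  shows "(\<Sum>t\<in>{a-H+1..<b}. z (t + j) * cnj (z (t + j'))) = correlation z a b (j - j')"
proof -
  have "(\<Sum>t\<in>{a-H+1..<b}. z (t + j) * cnj (z (t + j'))) =
        (\<Sum>t\<in>{a-H+1..<b}. (\<lambda>n. z (n + (j - j')) * cnj (z n)) (t + j'))"
    by (simp add: algebra_simps)
  also have "\<dots> = correlation z a b (j - j')"
    unfolding correlation_def using supp assms by (intro sum_shift_supported_int) auto
  finally show ?thesis .
qed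

lemma norm_correlation_uminus: "norm (correlation z a b (- d)) = norm (correlation z a b d)"
proof -
  define f where "f n = z n * cnj (z (n + d))" for n
  have f_supp: "f n = 0" if "n \<notin> {a..<b}" for n
    using supp[OF that] by (simp add: f_def)
  have "correlation z a b (- d) = (\<Sum>t\<in>{a..<b}. f (t + - d))"
    by (simp add: correlation_def f_def mult.commute)
  also have "\<dots> = (\<Sum>t\<in>{a + min 0 d..<b + max 0 d}. f (t + - d))"
    using supp by (intro sum.mono_neutral_left) (auto simp: f_def)
  also have "\<dots> = (\<Sum>n\<in>{a..<b}. f n)"
    using f_supp by (intro sum_shift_supported_int) auto
  also have "\<dots> = cnj (correlation z a b d)"
    unfolding correlation_def f_def by (simp add: mult.commute)
  finally show ?thesis
    by simp
qed

lemma sum_norm_windows_square_le: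
  assumes "H \<ge> 1" "a \<le> b" "\<And>n. norm (z n) \<le> 1"
  shows "(\<Sum>t\<in>{a-H+1..<b}. (norm (\<Sum>j\<in>{0..<H}. z (t + j)))\<^sup>2)
           \<le> H * ((b - a) + 2 * (\<Sum>d\<in>{1..<H}. norm (correlation z a b d)))"
proof -
  let ?U = "\<lambda>d. norm (correlation z a b d)"
  have "complex_of_real (\<Sum>t\<in>{a-H+1..<b}. (norm (\<Sum>j\<in>{0..<H}. z (t + j)))\<^sup>2)
      = (\<Sum>t\<in>{a-H+1..<b}. \<Sum>j\<in>{0..<H}. \<Sum>j'\<in>{0..<H}. z (t + j) * cnj (z (t + j')))"
    by (simp only: of_real_sum complex_norm_square) (simp add: sum_product)
  also have "\<dots> = (\<Sum>j\<in>{0..<H}. \<Sum>j'\<in>{0..<H}. \<Sum>t\<in>{a-H+1..<b}. z (t + j) * cnj (z (t + j')))"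
    by (simp only: sum.swap[of _ "{a-H+1..<b}"])
  also have "\<dots> = (\<Sum>j\<in>{0..<H}. \<Sum>j'\<in>{0..<H}. correlation z a b (j - j'))"
    using sum_windows_products by (intro sum.cong refl) auto
  finally have eq: "complex_of_real (\<Sum>t\<in>{a-H+1..<b}. (norm (\<Sum>j\<in>{0..<H}. z (t + j)))\<^sup>2)
      = (\<Sum>j\<in>{0..<H}. \<Sum>j'\<in>{0..<H}. correlation z a b (j - j'))" .
  have "(\<Sum>t\<in>{a-H+1..<b}. (norm (\<Sum>j\<in>{0..<H}. z (t + j)))\<^sup>2)
      = norm (complex_of_real (\<Sum>t\<in>{a-H+1..<b}. (norm (\<Sum>j\<in>{0..<H}. z (t + j)))\<^sup>2))"
    by (subst norm_of_real) (simp add: sum_nonneg)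
  also have "\<dots> \<le> (\<Sum>j\<in>{0..<H}. \<Sum>j'\<in>{0..<H}. ?U (j - j'))"
    unfolding eq by (intro order.trans[OF norm_sum] sum_mono norm_sum)
  also have "\<dots> \<le> (\<Sum>j\<in>{0..<H}. \<Sum>d\<in>{1-H..<H}. ?U d)"
  proof (intro sum_mono)
    fix j assume "j \<in> {0..<H}"
    then show "(\<Sum>j'\<in>{0..<H}. ?U (j - j')) \<le> (\<Sum>d\<in>{1-H..<H}. ?U d)"
      by (subst sum.reindex[of "\<lambda>j'. j - j'", unfolded comp_def, symmetric])
         (auto simp: inj_on_def intro!: sum_mono2)
  qed
  also have "(\<Sum>d\<in>{1-H..<H}. ?U d) = ?U 0 + 2 * (\<Sum>d\<in>{1..<H}. ?U d)"
    using norm_correlation_uminus assms(1) by (rule sum_symmetric_interval_int)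
  also have "?U 0 \<le> b - a"
  proof -
    have "?U 0 \<le> (\<Sum>n\<in>{a..<b}. norm (z n) * norm (z n))"
      unfolding correlation_def
      using norm_sum[of "\<lambda>n. z n * cnj (z n)" "{a..<b}"] by (simp add: norm_mult)
    also have "\<dots> \<le> (\<Sum>n\<in>{a..<b}. 1)"
      using assms(3) by (intro sum_mono) (simp add: mult_le_one)
    finally show ?thesis
      using assms(2) by simp
  qed
  then have "(\<Sum>j\<in>{0..<H}. ?U 0 + 2 * (\<Sum>d\<in>{1..<H}. ?U d))
      \<le> H * ((b - a) + 2 * (\<Sum>d\<in>{1..<H}. ?U d))"
    using assms(1) by simp
  finally show ?thesis .
qed

theorem van_der_corput_inequality:
  assumes "a \<le> b" "H \<ge> 1" "\<And>n. norm (z n) \<le> 1"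
  shows "(norm (\<Sum>n\<in>{a..<b}. z n))\<^sup>2
           \<le> (b - a + H - 1) / H * ((b - a) + 2 * (\<Sum>d\<in>{1..<H}. norm (correlation z a b d)))"
proof -
  let ?T = "{a-H+1..<b}" and ?R = "(b - a) + 2 * (\<Sum>d\<in>{1..<H}. norm (correlation z a b d))"
  have "(of_int H)\<^sup>2 * (norm (\<Sum>n\<in>{a..<b}. z n))\<^sup>2 = (norm (\<Sum>t\<in>?T. \<Sum>j\<in>{0..<H}. z (t + j)))\<^sup>2"
    using of_int_mult_sum_eq_sum_windows[OF assms(2), symmetric] assms(2)
    by (simp add: norm_mult power_mult_distrib)
  also have "\<dots> \<le> (\<Sum>t\<in>?T. norm (\<Sum>j\<in>{0..<H}. z (t + j)))\<^sup>2"
    by (intro power_mono norm_sum) auto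
  also have "\<dots> \<le> (\<Sum>t\<in>?T. (norm (\<Sum>j\<in>{0..<H}. z (t + j)))\<^sup>2) * card ?T"
    by (rule sum_squared_le_sum_of_squares)
  also have "\<dots> = card ?T * (\<Sum>t\<in>?T. (norm (\<Sum>j\<in>{0..<H}. z (t + j)))\<^sup>2)"
    by (rule mult.commute)
  also have "\<dots> \<le> card ?T * (H * ?R)"
    using sum_norm_windows_square_le[OF assms(2,1,3)] by (intro mult_left_mono) auto
  also have "real (card ?T) = of_int (b - a + H - 1)"
    using assms by simp
  finally have "of_int H * (of_int H * (norm (\<Sum>n\<in>{a..<b}. z n))\<^sup>2)
      \<le> of_int H * (of_int (b - a + H - 1) * ?R)"
    by (simp add: power2_eq_square mult_ac)
  then have "of_int H * (norm (\<Sum>n\<in>{a..<b}. z n))\<^sup>2 \<le> of_int (b - a + H - 1) * ?R"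
    using assms(2) by simp
  then show ?thesis
    using assms(2) by (simp add: field_simps)
qed

end

lemma van_der_corput_e_sum:
  fixes \<psi> :: "int \<Rightarrow> real" and a len H :: int and N Y :: real
  assumes H: "H \<ge> 1" and len: "len \<le> N" and "Y \<ge> 0" "N \<ge> 0"
    and shifted: "\<And>d. d \<in> {1..<H} \<Longrightarrow> norm (\<Sum>n\<in>{a..<a + len - d}. e (\<psi> (n + d) - \<psi> n)) \<le> Y"
  shows "(norm (\<Sum>n\<in>{a..<a + len}. e (\<psi> n)))\<^sup>2 \<le> (N + H - 1) / H * (N + 2 * (H - 1) * Y)"
proof (cases "len \<ge> 0")
  case False
  then show ?thesis
    using assms by simp
next
  case True
  define z where "z n = (if n \<in> {a..<a + len} then e (\<psi> n) else 0)" for n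
  have correlation_eq: "correlation z a (a + len) d = (\<Sum>n\<in>{a..<a + len - d}. e (\<psi> (n + d) - \<psi> n))"
    if "d \<in> {1..<H}" for d
  proof -
    have "correlation z a (a + len) d = (\<Sum>n\<in>{a..<a + len - d}. z (n + d) * cnj (z n))"
      unfolding correlation_def using that by (intro sum.mono_neutral_right) (auto simp: z_def)
    also have "\<dots> = (\<Sum>n\<in>{a..<a + len - d}. e (\<psi> (n + d) - \<psi> n))"
      using that by (intro sum.cong) (auto simp: z_def e_diff)
    finally show ?thesis .
  qed
  have "(\<Sum>d\<in>{1..<H}. norm (correlation z a (a + len) d)) \<le> (\<Sum>d\<in>{1..<H}. Y)"
    using correlation_eq shifted by (intro sum_mono) auto
  then have correlations: "(\<Sum>d\<in>{1..<H}. norm (correlation z a (a + len) d)) \<le> (H - 1) * Y"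
    using H by simp
  have supp: "\<And>n. n \<notin> {a..<a + len} \<Longrightarrow> z n = 0" and bound: "\<And>n. norm (z n) \<le> 1"
    by (auto simp: z_def)
  have "(norm (\<Sum>n\<in>{a..<a + len}. z n))\<^sup>2
      \<le> (len + H - 1) / H * (len + 2 * (\<Sum>d\<in>{1..<H}. norm (correlation z a (a + len) d)))"
    using van_der_corput_inequality[where z = z and a = a and b = "a + len" and H = H, OF supp _ H bound] True
    by simp
  also have "\<dots> \<le> (N + H - 1) / H * (N + 2 * ((H - 1) * Y))"
    using assms True correlations
    by (intro mult_mono divide_right_mono add_mono mult_left_mono)
      (auto intro!: add_nonneg_nonneg sum_nonneg)
  finally show ?thesis
    by (simp add: z_def algebra_simps)
qed

section \<open>Iterated differences\<close>

fun iter_diff :: "nat list \<Rightarrow> ('a::semiring_1 \<Rightarrow> real) \<Rightarrow> 'a \<Rightarrow> real" where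
  "iter_diff [] \<phi> x = \<phi> x"
| "iter_diff (r # rs) \<phi> x = iter_diff rs \<phi> (x + of_nat r) - iter_diff rs \<phi> x"

lemma iter_diff_of_int:
  fixes \<phi> :: "real \<Rightarrow> real"
  shows "iter_diff rs (\<lambda>k. \<phi> (of_int k)) n = iter_diff rs \<phi> (of_int n)"
  by (induction rs arbitrary: n) auto

lemma iter_diff_cmult:
  fixes f :: "'a::semiring_1 \<Rightarrow> real"
  shows "iter_diff rs (\<lambda>x. s * f x) x = s * iter_diff rs f x"
  by (induction rs arbitrary: x) (auto simp: algebra_simps)

context
  fixes F :: "nat \<Rightarrow> real \<Rightarrow> real"
  assumes deriv: "\<And>j y. y > 0 \<Longrightarrow> (F j has_real_derivative F (Suc j) y) (at y)"
begin

lemma has_real_derivative_iter_diff: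
  "y > 0 \<Longrightarrow> (iter_diff rs (F j) has_real_derivative iter_diff rs (F (Suc j)) y) (at y)"
proof (induction rs arbitrary: y)
  case Nil
  then show ?case
    using deriv by simp
next
  case (Cons r rs)
  have "((\<lambda>x. iter_diff rs (F j) (x + real r)) has_real_derivative
        iter_diff rs (F (Suc j)) (y + real r)) (at y)"
    using Cons.IH[of "y + real r"] Cons.prems by (subst DERIV_shift[symmetric]) simp
  from DERIV_diff[OF this Cons.IH[OF Cons.prems]] show ?case
    by (simp add: fun_eq_iff)
qed

lemma iter_diff_ge:
  assumes "x > 0"
    and "\<And>y. x \<le> y \<Longrightarrow> y \<le> x + real (sum_list rs) \<Longrightarrow> lo \<le> F (j + length rs) y"
  shows "real (prod_list rs) * lo \<le> iter_diff rs (F j) x"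
  using assms
proof (induction rs arbitrary: j x)
  case (Cons r rs)
  show ?case
  proof (cases "r = 0")
    case False
    obtain \<xi> where \<xi>: "x < \<xi>" "\<xi> < x + real r"
      and mvt: "iter_diff rs (F j) (x + real r) - iter_diff rs (F j) x = real r * iter_diff rs (F (Suc j)) \<xi>"
      using MVT2[of x "x + real r" "iter_diff rs (F j)" "iter_diff rs (F (Suc j))"] False Cons.prems(1)
        has_real_derivative_iter_diff by force
    have "real (prod_list rs) * lo \<le> iter_diff rs (F (Suc j)) \<xi>"
    proof (rule Cons.IH)
      fix y assume "\<xi> \<le> y" "y \<le> \<xi> + real (sum_list rs)"
      then show "lo \<le> F (Suc j + length rs) y"
        using Cons.prems(2)[of y] \<xi> by simp
    qed (use \<xi> Cons.prems in simp)
    then show ?thesis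
      using mvt by (simp add: mult.assoc mult_left_mono)
  qed simp
qed simp

end

lemma iter_diff_le:
  fixes F :: "nat \<Rightarrow> real \<Rightarrow> real"
  assumes "\<And>j y. y > 0 \<Longrightarrow> (F j has_real_derivative F (Suc j) y) (at y)" and "x > 0"
    and "\<And>y. x \<le> y \<Longrightarrow> y \<le> x + real (sum_list rs) \<Longrightarrow> F (j + length rs) y \<le> hi"
  shows "iter_diff rs (F j) x \<le> real (prod_list rs) * hi"
proof -
  have "real (prod_list rs) * (- hi) \<le> iter_diff rs (\<lambda>x. - F j x) x"
    by (rule iter_diff_ge[where F = "\<lambda>j x. - F j x"]) (use assms in \<open>auto intro: DERIV_minus\<close>)
  then show ?thesis
    using iter_diff_cmult[of rs "- 1" "F j" x] by simp
qed

lemma sum_atLeastLessThan_int_conv_lessThan: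
  "(\<Sum>n\<in>{a..<a + int M}. f n) = (\<Sum>t<M. f (a + int t))"
proof -
  have "{a..<a + int M} = (\<lambda>t. a + int t) ` {..<M}"
    by (auto simp: image_iff intro!: bexI[of _ "nat (_ - a)"])
  then show ?thesis
    by (simp add: sum.reindex inj_on_def)
qed

fun shifts_below :: "(nat \<Rightarrow> int) \<Rightarrow> nat list \<Rightarrow> bool" where
  "shifts_below G [] \<longleftrightarrow> True"
| "shifts_below G (d # rs) \<longleftrightarrow> 1 \<le> d \<and> int d < G (length rs) \<and> shifts_below G rs"

lemma prod_list_shifts_below_ge_1: "shifts_below G rs \<Longrightarrow> 1 \<le> prod_list rs"
  by (induction rs) auto

lemma prod_list_shifts_below_le:
  "shifts_below G rs \<Longrightarrow> real (prod_list rs) \<le> (\<Prod>j<length rs. real_of_int (G j))"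
proof (induction rs)
  case (Cons d rs)
  then have "real d \<le> real_of_int (G (length rs))" "real (prod_list rs) \<le> (\<Prod>j<length rs. real_of_int (G j))"
    by auto
  then have "real d * real (prod_list rs) \<le> real_of_int (G (length rs)) * (\<Prod>j<length rs. real_of_int (G j))"
    by (intro mult_mono) auto
  then show ?case
    by (simp add: mult.commute)
qed simp

theorem van_der_corput_iterated:
  fixes g :: "int \<Rightarrow> real" and a :: int and M :: nat and N :: real
    and X :: "nat \<Rightarrow> real" and G :: "nat \<Rightarrow> int"
  assumes M: "real M \<le> N"
    and base: "\<And>rs. length rs = q \<Longrightarrow> shifts_below G rs \<Longrightarrow>
        norm (\<Sum>n\<in>{a..<a + int M - int (sum_list rs)}. e (iter_diff rs g n)) \<le> X q"
    and G: "\<And>j. j < q \<Longrightarrow> G j \<ge> 1"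
    and X: "\<And>j. j \<le> q \<Longrightarrow> X j \<ge> 0"
    and step: "\<And>j. j < q \<Longrightarrow> (N + G j - 1) / G j * (N + 2 * (G j - 1) * X (Suc j)) \<le> (X j)\<^sup>2"
  shows "norm (\<Sum>n\<in>{a..<a + int M}. e (g n)) \<le> X 0"
proof -
  have "\<forall>rs. length rs = j \<longrightarrow> shifts_below G rs \<longrightarrow>
          norm (\<Sum>n\<in>{a..<a + int M - int (sum_list rs)}. e (iter_diff rs g n)) \<le> X j"
    if "j \<le> q" for j
    using that
  proof (induction j rule: inc_induct)
    case (step j)
    show ?case
    proof (intro allI impI)
      fix rs assume rs: "length rs = j" "shifts_below G rs"
      define len where "len = int M - int (sum_list rs)"
      have "norm (\<Sum>n\<in>{a..<a + len - d}. e (iter_diff rs g (n + d) - iter_diff rs g n)) \<le> X (Suc j)"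
        if "d \<in> {1..<G j}" for d
      proof -
        have "iter_diff (nat d # rs) g n = iter_diff rs g (n + d) - iter_diff rs g n" for n
          using that by simp
        moreover have "{a..<a + int M - int (sum_list (nat d # rs))} = {a..<a + len - d}"
          using that by (auto simp: len_def)
        moreover have "norm (\<Sum>n\<in>{a..<a + int M - int (sum_list (nat d # rs))}.
            e (iter_diff (nat d # rs) g n)) \<le> X (Suc j)"
          using step.IH[rule_format, of "nat d # rs"] rs that by (simp add: le_nat_iff)
        ultimately show ?thesis
          by simp
      qed
      then have "(norm (\<Sum>n\<in>{a..<a + len}. e (iter_diff rs g n)))\<^sup>2
          \<le> (N + G j - 1) / G j * (N + 2 * (G j - 1) * X (Suc j))"
        using G X step.hyps M len_def by (intro van_der_corput_e_sum) auto
      also have "\<dots> \<le> (X j)\<^sup>2"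
        using assms(5) step.hyps by simp
      finally show "norm (\<Sum>n\<in>{a..<a + int M - int (sum_list rs)}. e (iter_diff rs g n)) \<le> X j"
        using X[of j] step.hyps by (simp add: len_def power2_le_iff_abs_le add_diff_eq)
    qed
  qed (use base in blast)
  from this[of 0] show ?thesis
    by simp
qed

lemma kusmin_landau_iter_diff_lessThan:
  fixes F :: "nat \<Rightarrow> real \<Rightarrow> real" and N :: nat and rs :: "nat list"
  assumes deriv: "\<And>j y. y > 0 \<Longrightarrow> (F j has_real_derivative F (Suc j) y) (at y)"
    and N: "N \<ge> 1"
    and first: "\<And>y. real N \<le> y \<Longrightarrow> y \<le> 2 * real N \<Longrightarrow>
                  lo \<le> F (length rs + 1) y \<and> F (length rs + 1) y \<le> hi"
    and second: "(\<forall>y. real N \<le> y \<longrightarrow> y \<le> 2 * real N \<longrightarrow> 0 \<le> F (length rs + 2) y) \<or>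
                 (\<forall>y. real N \<le> y \<longrightarrow> y \<le> 2 * real N \<longrightarrow> F (length rs + 2) y \<le> 0)"
    and prod: "1 \<le> prod_list rs" "real (prod_list rs) * hi \<le> 1/2"
    and lo: "0 < lo"
  shows "norm (\<Sum>t<N - sum_list rs. e (iter_diff rs (F 0) (real N + real t))) \<le> 2 / lo"
proof -
  define M where "M = N - sum_list rs"
  define \<phi> where "\<phi> t = iter_diff rs (F 0) (real N + real t)" for t
  have in_range: "real N \<le> y \<and> y \<le> 2 * real N"
    if "t + k < M" "real N + real t \<le> y" "y \<le> real N + real t + real (k + sum_list rs)" for t k y
    using that by (auto simp: M_def)
  have lo_le_hi: "lo \<le> hi"
    using first[of N] N by simp
  have "1 * hi \<le> real (prod_list rs) * hi"
    using prod(1) lo lo_le_hi by (intro mult_right_mono) auto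
  then have hi: "hi \<le> 1/2"
    using prod(2) by simp
  have "norm (\<Sum>t<M. e (\<phi> t)) \<le> 2 / lo"
  proof (rule kusmin_landau)
    fix t assume t: "t + 1 < M"
    have "real (prod_list (1 # rs)) * lo \<le> iter_diff (1 # rs) (F 0) (real N + real t)"
      using in_range[OF t] first N by (intro iter_diff_ge[where F = F, OF deriv]) auto
    moreover have "iter_diff (1 # rs) (F 0) (real N + real t) \<le> real (prod_list (1 # rs)) * hi"
      using in_range[OF t] first N by (intro iter_diff_le[where F = F, OF deriv]) auto
    moreover have "lo \<le> real (prod_list rs) * lo"
      using prod lo by simp
    ultimately show "lo \<le> \<phi> (t+1) - \<phi> t \<and> \<phi> (t+1) - \<phi> t \<le> 1 - lo"
      using prod hi lo_le_hi by (auto simp: \<phi>_def ac_simps)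
  next
    have second_diff: "(\<phi> (t+2) - \<phi> (t+1)) - (\<phi> (t+1) - \<phi> t) = iter_diff (1 # 1 # rs) (F 0) (real N + real t)"
      for t
      by (simp add: \<phi>_def algebra_simps)
    show "(\<forall>t. t + 2 < M \<longrightarrow> \<phi> (t+1) - \<phi> t \<le> \<phi> (t+2) - \<phi> (t+1)) \<or>
          (\<forall>t. t + 2 < M \<longrightarrow> \<phi> (t+2) - \<phi> (t+1) \<le> \<phi> (t+1) - \<phi> t)"
      using second
    proof (elim disjE)
      assume "\<forall>y. real N \<le> y \<longrightarrow> y \<le> 2 * real N \<longrightarrow> 0 \<le> F (length rs + 2) y"
      then have curv: "real (prod_list (1 # 1 # rs)) * 0 \<le> iter_diff (1 # 1 # rs) (F 0) (real N + real t)"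
        if "t + 2 < M" for t
        using in_range[OF that] N by (intro iter_diff_ge[where F = F, OF deriv]) (auto simp: numeral_2_eq_2)
      have "\<phi> (t+1) - \<phi> t \<le> \<phi> (t+2) - \<phi> (t+1)" if "t + 2 < M" for t
        using second_diff[of t] curv[OF that] by simp
      then show ?thesis
        by blast
    next
      assume "\<forall>y. real N \<le> y \<longrightarrow> y \<le> 2 * real N \<longrightarrow> F (length rs + 2) y \<le> 0"
      then have curv: "iter_diff (1 # 1 # rs) (F 0) (real N + real t) \<le> real (prod_list (1 # 1 # rs)) * 0"
        if "t + 2 < M" for t
        using in_range[OF that] N by (intro iter_diff_le[where F = F, OF deriv]) (auto simp: numeral_2_eq_2)
      have "\<phi> (t+2) - \<phi> (t+1) \<le> \<phi> (t+1) - \<phi> t" if "t + 2 < M" for t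
        using second_diff[of t] curv[OF that] by simp
      then show ?thesis
        by blast
    qed
  qed (use lo hi lo_le_hi in auto)
  then show ?thesis
    by (simp add: M_def \<phi>_def)
qed

theorem kusmin_landau_iter_diff:
  fixes F :: "nat \<Rightarrow> real \<Rightarrow> real" and N :: nat and rs :: "nat list"
  assumes "\<And>j y. y > 0 \<Longrightarrow> (F j has_real_derivative F (Suc j) y) (at y)"
    and "N \<ge> 1"
    and "\<And>y. real N \<le> y \<Longrightarrow> y \<le> 2 * real N \<Longrightarrow>
           lo \<le> F (length rs + 1) y \<and> F (length rs + 1) y \<le> hi"
    and "(\<forall>y. real N \<le> y \<longrightarrow> y \<le> 2 * real N \<longrightarrow> 0 \<le> F (length rs + 2) y) \<or>
         (\<forall>y. real N \<le> y \<longrightarrow> y \<le> 2 * real N \<longrightarrow> F (length rs + 2) y \<le> 0)"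
    and "1 \<le> prod_list rs" "real (prod_list rs) * hi \<le> 1/2"
    and lo: "0 < lo"
  shows "norm (\<Sum>n\<in>{int N..<int N + int N - int (sum_list rs)}. e (iter_diff rs (\<lambda>n. F 0 (of_int n)) n))
           \<le> 2 / lo"
proof (cases "sum_list rs < N")
  case False
  then show ?thesis
    using lo by simp
next
  case True
  then have "int N + int N - int (sum_list rs) = int N + int (N - sum_list rs)"
    by (simp add: of_nat_diff)
  then have "(\<Sum>n\<in>{int N..<int N + int N - int (sum_list rs)}. e (iter_diff rs (\<lambda>n. F 0 (of_int n)) n))
      = (\<Sum>t<N - sum_list rs. e (iter_diff rs (F 0) (real N + real t)))"
    by (simp only: sum_atLeastLessThan_int_conv_lessThan) (simp add: iter_diff_of_int)
  then show ?thesis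
    using kusmin_landau_iter_diff_lessThan[OF assms] by simp
qed

lemma van_der_corput_step_bound:
  fixes N \<theta> H K :: real
  assumes N: "N \<ge> 1" and \<theta>: "0 \<le> \<theta>" "\<theta> \<le> 1"
    and H: "N powr \<theta> / 2 \<le> H" "H \<le> N powr \<theta>" "H \<ge> 1" and K: "K \<ge> 1"
  shows "(N + H - 1) / H * (N + 2 * (H - 1) * (K * N powr (1 - \<theta>))) \<le> (8 * K * N powr (1 - \<theta> / 2))\<^sup>2"
proof -
  define Y where "Y = N powr \<theta>"
  have Y: "Y \<ge> 1" "Y \<le> N"
    unfolding Y_def using N \<theta> powr_mono[of \<theta> 1 N] by (auto intro: ge_one_powr_ge_zero)
  have "(N + H - 1) / H \<le> 2 * N / (Y / 2)"
    using H Y unfolding Y_def[symmetric]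
    by (intro order.trans[OF divide_right_mono divide_left_mono]) auto
  moreover have "N + 2 * (H - 1) * (K * N powr (1 - \<theta>)) \<le> N * (1 + 2 * K)"
  proof -
    have "2 * (H - 1) * (K * N powr (1 - \<theta>)) \<le> 2 * Y * (K * N powr (1 - \<theta>))"
      using H K unfolding Y_def[symmetric] by (intro mult_right_mono) auto
    also have "\<dots> = 2 * K * (Y * N powr (1 - \<theta>))"
      by (simp add: mult_ac)
    also have "Y * N powr (1 - \<theta>) = N"
      unfolding Y_def using N by (simp flip: powr_add)
    finally show ?thesis
      by (simp add: algebra_simps)
  qed
  ultimately have "(N + H - 1) / H * (N + 2 * (H - 1) * (K * N powr (1 - \<theta>)))
      \<le> 2 * N / (Y / 2) * (N * (1 + 2 * K))"
    using H K N Y by (intro mult_mono) auto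
  also have "\<dots> = 4 * (1 + 2 * K) * (N * N / Y)"
    by (simp add: field_simps)
  also have "\<dots> \<le> 64 * K\<^sup>2 * (N * N / Y)"
    using K Y N by (intro mult_right_mono) (auto simp: power2_eq_square intro: order.trans[of _ "64 * K"])
  also have "N * N / Y = (N powr (1 - \<theta> / 2))\<^sup>2"
    unfolding Y_def using N
    by (simp add: power2_eq_square powr_diff powr_half_sqrt flip: powr_add)
  finally show ?thesis
    by (simp add: power_mult_distrib)
qed

section \<open>Derivatives and moments of the phase\<close>

definition falling_fact :: "real \<Rightarrow> nat \<Rightarrow> real" where
  "falling_fact s n = (\<Prod>i<n. s - real i)"

lemma falling_fact_0 [simp]: "falling_fact s 0 = 1"
  by (simp add: falling_fact_def)

lemma falling_fact_Suc: "falling_fact s (Suc n) = falling_fact s n * (s - real n)"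
  by (simp add: falling_fact_def)

lemma falling_fact_nonzero:
  assumes "s \<notin> \<int>"
  shows "falling_fact s n \<noteq> 0"
proof -
  have "s - real i \<noteq> 0" for i
    using assms by (metis Ints_of_nat eq_iff_diff_eq_0)
  then show ?thesis
    by (simp add: falling_fact_def)
qed

definition phase_deriv :: "real \<Rightarrow> nat \<Rightarrow> nat \<Rightarrow> (nat \<Rightarrow> int) \<Rightarrow> nat \<Rightarrow> real \<Rightarrow> real" where
  "phase_deriv c m L h j x =
     1 / real m * falling_fact c j * (\<Sum>l<L. real_of_int (h l) * (x + real l) powr (c - real j))"

definition moment :: "nat \<Rightarrow> (nat \<Rightarrow> int) \<Rightarrow> nat \<Rightarrow> int" where
  "moment L h i = (\<Sum>l<L. h l * int l ^ i)"

lemma has_real_derivative_phase_deriv: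
  assumes "x > 0"
  shows "(phase_deriv c m L h j has_real_derivative phase_deriv c m L h (Suc j) x) (at x)"
proof -
  have "((\<lambda>x. \<Sum>l<L. real_of_int (h l) * (x + real l) powr (c - real j)) has_real_derivative
      (\<Sum>l<L. real_of_int (h l) * ((c - real j) * (x + real l) powr (c - real j - 1)))) (at x)"
    using assms by (intro DERIV_sum DERIV_cmult) (auto intro!: derivative_eq_intros)
  then have "(phase_deriv c m L h j has_real_derivative 1 / real m * falling_fact c j *
      (\<Sum>l<L. real_of_int (h l) * ((c - real j) * (x + real l) powr (c - real j - 1)))) (at x)"
    unfolding phase_deriv_def[abs_def] by (rule DERIV_cmult)
  moreover have "1 / real m * falling_fact c j *
      (\<Sum>l<L. real_of_int (h l) * ((c - real j) * (x + real l) powr (c - real j - 1)))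
      = phase_deriv c m L h (Suc j) x"
    by (simp add: phase_deriv_def falling_fact_Suc sum_distrib_left algebra_simps)
  ultimately show ?thesis
    by simp
qed

lemma taylor_powr_remainder:
  fixes s x l :: real and n :: nat
  assumes x: "x > 0" and l: "l \<ge> 0" and n: "n \<ge> 1" and sn: "s \<le> real n"
  shows "\<bar>(x + l) powr s - (\<Sum>i<n. falling_fact s i / fact i * x powr (s - real i) * l ^ i)\<bar>
           \<le> \<bar>falling_fact s n\<bar> / fact n * l ^ n * x powr (s - real n)"
proof (cases "l = 0")
  case True
  have "(\<Sum>i<n. falling_fact s i / fact i * x powr (s - real i) * l ^ i)
      = (\<Sum>i\<in>{0}. falling_fact s i / fact i * x powr (s - real i) * l ^ i)"
    using True n by (intro sum.mono_neutral_right) auto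
  then show ?thesis
    using True n by simp
next
  case False
  define D where "D i t = falling_fact s i * t powr (s - real i)" for i t
  have D_deriv: "\<forall>i t. i < n \<and> x \<le> t \<and> t \<le> x + l \<longrightarrow> (D i has_real_derivative D (Suc i) t) (at t)"
  proof (intro allI impI)
    fix i t assume "i < n \<and> x \<le> t \<and> t \<le> x + l"
    then have "t > 0"
      using x by auto
    then show "(D i has_real_derivative D (Suc i) t) (at t)"
      unfolding D_def[abs_def]
      by (auto intro!: derivative_eq_intros simp: falling_fact_Suc algebra_simps)
  qed
  have "\<exists>t. x < t \<and> t < x + l \<and>
      (x + l) powr s = (\<Sum>i<n. D i x / fact i * (x + l - x) ^ i) + D n t / fact n * (x + l - x) ^ n"
    by (intro Taylor_up[OF _ _ D_deriv]) (use n False l in \<open>auto simp: D_def\<close>)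
  then obtain t where t: "x < t" "t < x + l"
    and taylor: "(x + l) powr s = (\<Sum>i<n. D i x / fact i * l ^ i) + D n t / fact n * l ^ n"
    by auto
  have "\<bar>(x + l) powr s - (\<Sum>i<n. falling_fact s i / fact i * x powr (s - real i) * l ^ i)\<bar>
      = \<bar>falling_fact s n\<bar> / fact n * l ^ n * t powr (s - real n)"
    using taylor l by (simp add: D_def abs_mult algebra_simps)
  also have "\<dots> \<le> \<bar>falling_fact s n\<bar> / fact n * l ^ n * x powr (s - real n)"
    using t x sn l by (intro mult_left_mono powr_mono2') auto
  finally show ?thesis .
qed

lemma abs_moment_le:
  assumes "\<forall>l<L. \<bar>real_of_int (h l)\<bar> \<le> B"
  shows "\<bar>real_of_int (moment L h i)\<bar> \<le> real L * real L ^ i * B"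
proof -
  have "\<bar>real_of_int (moment L h i)\<bar> \<le> (\<Sum>l<L. \<bar>real_of_int (h l) * real l ^ i\<bar>)"
    unfolding moment_def by (simp add: sum_abs del: of_int_abs)
  also have "\<dots> \<le> (\<Sum>l<L. B * real L ^ i)"
    using assms by (intro sum_mono) (auto simp: abs_mult intro!: mult_mono power_mono)
  finally show ?thesis
    by (simp add: mult_ac)
qed

lemma weighted_powr_sum_expansion:
  fixes s x :: real and h :: "nat \<Rightarrow> int" and B :: real
  assumes x: "x > 0" and moments: "\<forall>i<k. moment L h i = 0" and sk: "s \<le> real (Suc k)"
    and B: "\<forall>l<L. \<bar>real_of_int (h l)\<bar> \<le> B"
  shows "\<bar>(\<Sum>l<L. real_of_int (h l) * (x + real l) powr s)
            - falling_fact s k / fact k * real_of_int (moment L h k) * x powr (s - real k)\<bar>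
     \<le> real L * B * (\<bar>falling_fact s (Suc k)\<bar> / fact (Suc k) * real L ^ Suc k * x powr (s - real (Suc k)))"
proof -
  define P where "P l = (\<Sum>i<Suc k. falling_fact s i / fact i * x powr (s - real i) * real l ^ i)" for l :: nat
  define E where "E = \<bar>falling_fact s (Suc k)\<bar> / fact (Suc k) * real L ^ Suc k * x powr (s - real (Suc k))"
  have remainder: "\<bar>(x + real l) powr s - P l\<bar> \<le> E" if "l < L" for l
  proof -
    have "\<bar>(x + real l) powr s - P l\<bar>
        \<le> \<bar>falling_fact s (Suc k)\<bar> / fact (Suc k) * real l ^ Suc k * x powr (s - real (Suc k))"
      unfolding P_def using x sk by (intro taylor_powr_remainder) auto
    also have "\<dots> \<le> E"
      unfolding E_def using that by (intro mult_right_mono mult_left_mono power_mono) auto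
    finally show ?thesis .
  qed
  have "(\<Sum>l<L. real_of_int (h l) * P l)
      = (\<Sum>i<Suc k. falling_fact s i / fact i * x powr (s - real i) * real_of_int (moment L h i))"
  proof -
    have "(\<Sum>l<L. real_of_int (h l) * P l)
        = (\<Sum>i<Suc k. \<Sum>l<L. real_of_int (h l) * (falling_fact s i / fact i * x powr (s - real i) * real l ^ i))"
      unfolding P_def by (simp only: sum_distrib_left) (rule sum.swap)
    then show ?thesis
      unfolding moment_def by (simp add: sum_distrib_left sum_divide_distrib mult_ac)
  qed
  also have "\<dots> = falling_fact s k / fact k * real_of_int (moment L h k) * x powr (s - real k)"
    using moments by (subst sum.lessThan_Suc) (simp add: sum.neutral)
  finally have leading: "(\<Sum>l<L. real_of_int (h l) * P l)
      = falling_fact s k / fact k * real_of_int (moment L h k) * x powr (s - real k)" .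
  have "\<bar>(\<Sum>l<L. real_of_int (h l) * (x + real l) powr s) - (\<Sum>l<L. real_of_int (h l) * P l)\<bar>
      \<le> (\<Sum>l<L. \<bar>real_of_int (h l)\<bar> * \<bar>(x + real l) powr s - P l\<bar>)"
    by (simp add: sum_subtractf[symmetric] right_diff_distrib[symmetric])
      (rule order.trans[OF sum_abs], simp add: abs_mult)
  also have "\<dots> \<le> (\<Sum>l<L. B * E)"
    using B remainder by (intro sum_mono mult_mono) auto
  finally show ?thesis
    using leading by (simp add: E_def)
qed

lemma moment_nonzero:
  assumes "\<exists>l<L. h l \<noteq> 0"
  shows "\<exists>i<L. moment L h i \<noteq> 0"
proof (rule ccontr)
  assume "\<not> (\<exists>i<L. moment L h i \<noteq> 0)"
  then have moments: "\<forall>i<L. moment L h i = 0"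
    by auto
  obtain l0 where l0: "l0 < L" "h l0 \<noteq> 0"
    using assms by auto
  \<comment> \<open>pairing \<open>h\<close> with the Lagrange polynomial vanishing at \<open>l \<noteq> l0\<close> isolates \<open>h l0\<close>\<close>
  define p :: "int poly" where "p = (\<Prod>j\<in>{..<L} - {l0}. [:- int j, 1:])"
  have "degree p \<le> card ({..<L} - {l0})"
    unfolding p_def using degree_prod_sum_le[of "{..<L} - {l0}" "\<lambda>j. [:- int j, 1:]"] by simp
  then have deg: "degree p < L"
    using l0 by (simp add: card_Diff_singleton)
  have "(\<Sum>l<L. h l * poly p (int l)) = (\<Sum>l<L. \<Sum>i\<le>degree p. h l * (coeff p i * int l ^ i))"
    by (simp add: poly_altdef sum_distrib_left)
  also have "\<dots> = (\<Sum>i\<le>degree p. \<Sum>l<L. h l * (coeff p i * int l ^ i))"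
    by (rule sum.swap)
  also have "\<dots> = (\<Sum>i\<le>degree p. coeff p i * moment L h i)"
    unfolding moment_def by (intro sum.cong refl) (simp add: sum_distrib_left mult_ac)
  also have "\<dots> = 0"
    using moments deg by (intro sum.neutral) auto
  finally have "(\<Sum>l<L. h l * poly p (int l)) = 0" .
  moreover have "(\<Sum>l<L. h l * poly p (int l)) = (\<Sum>l\<in>{l0}. h l * poly p (int l))"
    using l0 by (intro sum.mono_neutral_right) (auto simp: p_def poly_prod)
  moreover have "poly p (int l0) \<noteq> 0"
    by (simp add: p_def poly_prod)
  ultimately show False
    using l0 by simp
qed

lemma abs_le_sup_norm:
  assumes "l < L"
  shows "\<bar>real_of_int (h l)\<bar> \<le> sup_norm L h"
proof -
  have "\<bar>h l\<bar> \<le> Max ((\<lambda>l. \<bar>h l\<bar>) ` {..<L})"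
    using assms by (intro Max_ge) auto
  then have "real_of_int \<bar>h l\<bar> \<le> real_of_int (Max ((\<lambda>l. \<bar>h l\<bar>) ` {..<L}))"
    by (simp only: of_int_le_iff)
  then show ?thesis
    using assms by (simp add: sup_norm_def)
qed

lemma sup_norm_nonneg: "sup_norm L h \<ge> 0"
  using abs_le_sup_norm[of 0 L h] by (cases "L = 0") (auto simp: sup_norm_def)

lemma sup_norm_ge_1:
  assumes "\<exists>l<L. h l \<noteq> 0"
  shows "sup_norm L h \<ge> 1"
proof -
  obtain l where "l < L" "h l \<noteq> 0"
    using assms by auto
  then show ?thesis
    using abs_le_sup_norm[of l L h] by linarith
qed

lemma floor_ge_half:
  fixes y :: real
  assumes "y \<ge> 1"
  shows "y / 2 \<le> \<lfloor>y\<rfloor>" "\<lfloor>y\<rfloor> \<ge> 1"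
proof -
  show "\<lfloor>y\<rfloor> \<ge> 1"
    using assms by (simp add: le_floor_iff)
  then show "y / 2 \<le> \<lfloor>y\<rfloor>"
    using assms by (cases "y \<ge> 2") linarith+
qed

lemma eventually_le_powr_sequentially:
  fixes \<epsilon> :: real
  assumes "\<epsilon> > 0"
  shows "eventually (\<lambda>N. K \<le> real N powr \<epsilon>) sequentially"
proof -
  have "K \<le> real N powr \<epsilon>" if "N \<ge> nat \<lceil>max 1 K powr (1 / \<epsilon>)\<rceil>" for N
  proof -
    have "max 1 K powr (1 / \<epsilon>) \<le> real N"
      using that by linarith
    then have "(max 1 K powr (1 / \<epsilon>)) powr \<epsilon> \<le> real N powr \<epsilon>"
      using assms by (intro powr_mono2) auto
    then show ?thesis
      using assms by (simp add: powr_powr)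
  qed
  then show ?thesis
    unfolding eventually_sequentially by blast
qed

text \<open>\<open>k0\<close> is meant to be the least order of a nonvanishing moment of \<open>h\<close>; then \<open>q\<close> is the number
  of differencing steps.\<close>

locale vdc_exponent =
  fixes c :: real and m k0 :: nat
  assumes c_gt_1: "c > 1" and c_not_int: "c \<notin> \<int>" and m_pos: "m > 0" and k0_le: "k0 \<le> nat \<lfloor>c\<rfloor>"
begin

definition "k = nat \<lfloor>c\<rfloor>"
definition "L = k + 1"
definition "q = k - k0"
definition "eta = dist_int c / 2 powr (c + 1)"

lemma c_eq: "c = real k + frac c"
  using c_gt_1 by (simp add: k_def frac_def)

lemma frac_c_pos: "0 < frac c" and frac_c_lt_1: "frac c < 1"
  using c_not_int frac_lt_1 by auto

lemma k0_plus_q: "k0 + q = k"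
  using k0_le by (simp add: q_def k_def)

lemma eta_pos: "0 < eta"
  using frac_c_pos frac_c_lt_1 by (simp add: eta_def dist_int_def)

lemma two_pow_le: "(2::real) ^ j \<le> 2 powr (c + 1)" if "j \<le> k + 1"
proof -
  have "(2::real) ^ j = 2 powr real j"
    by (simp add: powr_realpow)
  also have "\<dots> \<le> 2 powr (c + 1)"
  proof (rule powr_mono)
    have "real j \<le> real k + 1"
      using that by simp
    then show "real j \<le> c + 1"
      using c_eq frac_ge_0[of c] by linarith
  qed simp
  finally show ?thesis .
qed

lemma two_pow_mult_eta_le_frac:
  assumes "j \<le> k"
  shows "(2::real) ^ j * eta \<le> frac c"
proof -
  have "(2::real) ^ j * eta \<le> 2 powr (c + 1) * eta"
    using assms two_pow_le[of j] eta_pos by (intro mult_right_mono) auto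
  also have "\<dots> \<le> frac c"
    by (simp add: eta_def dist_int_def)
  finally show ?thesis .
qed

lemma two_pow_mult_eta_lt_1_minus_frac: "((2::real) ^ (k + 1) - 1) * eta < 1 - frac c"
proof -
  have "((2::real) ^ (k + 1) - 1) * eta < 2 powr (c + 1) * eta"
    using two_pow_le[of "k + 1"] eta_pos by (intro mult_strict_right_mono) auto
  also have "\<dots> \<le> 1 - frac c"
    by (simp add: eta_def dist_int_def)
  finally show ?thesis .
qed

lemma eta_lt_1: "eta < 1"
  using two_pow_mult_eta_le_frac[of 0] frac_c_lt_1 by simp

lemma exponent_q_plus: "c - real (q + i) - real k0 = frac c - real i"
  using c_eq k0_plus_q by (simp add: algebra_simps flip: of_nat_add)

definition "alpha h j =
  1 / real m * falling_fact c j * (falling_fact (c - real j) k0 / fact k0) * real_of_int (moment L h k0)"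

definition "lead_factor j = 1 / real m * \<bar>falling_fact c j\<bar> * \<bar>falling_fact (c - real j) k0\<bar> / fact k0"

definition "error_factor j = 1 / real m * \<bar>falling_fact c j\<bar> *
  (real L * (\<bar>falling_fact (c - real j) (Suc k0)\<bar> / fact (Suc k0) * real L ^ Suc k0))"

lemma lead_factor_pos: "lead_factor j > 0"
proof -
  have "c \<notin> \<int>" "c - real j \<notin> \<int>"
    using c_not_int by (metis Ints_add Ints_of_nat diff_add_cancel)+
  then show ?thesis
    using m_pos by (simp add: lead_factor_def falling_fact_nonzero)
qed

lemma error_factor_nonneg: "error_factor j \<ge> 0"
  by (simp add: error_factor_def)

lemma abs_alpha: "\<bar>alpha h j\<bar> = lead_factor j * \<bar>real_of_int (moment L h k0)\<bar>"
  by (simp add: alpha_def lead_factor_def abs_mult)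

lemma abs_alpha_ge:
  assumes "moment L h k0 \<noteq> 0"
  shows "lead_factor j \<le> \<bar>alpha h j\<bar>"
  using assms lead_factor_pos[of j] by (simp add: abs_alpha)

lemma abs_alpha_le:
  assumes "\<forall>l<L. \<bar>real_of_int (h l)\<bar> \<le> hn"
  shows "\<bar>alpha h j\<bar> \<le> lead_factor j * (real L * real L ^ k0 * hn)"
  unfolding abs_alpha using abs_moment_le[OF assms] lead_factor_pos[of j] by (intro mult_left_mono) auto

lemma phase_deriv_expansion:
  assumes x: "x > 0" and moments: "\<forall>i<k0. moment L h i = 0" and j: "j \<ge> q + 1"
    and h: "\<forall>l<L. \<bar>real_of_int (h l)\<bar> \<le> hn"
  shows "\<bar>phase_deriv c m L h j x - alpha h j * x powr (c - real j - real k0)\<bar>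
           \<le> error_factor j * hn * x powr (c - real j - real k0 - 1)"
proof -
  have "c - real j \<le> real (Suc k0)"
    using j c_eq k0_plus_q frac_c_lt_1 by linarith
  from weighted_powr_sum_expansion[OF x moments this h]
  have "\<bar>1 / real m * falling_fact c j\<bar> *
      \<bar>(\<Sum>l<L. real_of_int (h l) * (x + real l) powr (c - real j))
        - falling_fact (c - real j) k0 / fact k0 * real_of_int (moment L h k0) * x powr (c - real j - real k0)\<bar>
    \<le> \<bar>1 / real m * falling_fact c j\<bar> * (real L * hn * (\<bar>falling_fact (c - real j) (Suc k0)\<bar> / fact (Suc k0)
        * real L ^ Suc k0 * x powr (c - real j - real (Suc k0))))"
    by (intro mult_left_mono) auto
  moreover have "phase_deriv c m L h j x - alpha h j * x powr (c - real j - real k0)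
      = 1 / real m * falling_fact c j * ((\<Sum>l<L. real_of_int (h l) * (x + real l) powr (c - real j))
        - falling_fact (c - real j) k0 / fact k0 * real_of_int (moment L h k0) * x powr (c - real j - real k0))"
    by (simp add: phase_deriv_def alpha_def algebra_simps)
  moreover have "\<bar>1 / real m * falling_fact c j\<bar> * (real L * hn * (\<bar>falling_fact (c - real j) (Suc k0)\<bar>
        / fact (Suc k0) * real L ^ Suc k0 * x powr (c - real j - real (Suc k0))))
      = error_factor j * hn * x powr (c - real j - real k0 - 1)"
    by (simp add: error_factor_def abs_mult algebra_simps)
  ultimately show ?thesis
    by (simp only: abs_mult)
qed

lemma phase_deriv_near_leading:
  assumes x: "N \<le> x" and N: "N \<ge> 1" and hn: "hn \<le> N powr eta"
    and large: "2 * error_factor j / lead_factor j \<le> N powr (1 - eta)"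
    and moments: "\<forall>i<k0. moment L h i = 0" "moment L h k0 \<noteq> 0" and j: "j \<ge> q + 1"
    and h: "\<forall>l<L. \<bar>real_of_int (h l)\<bar> \<le> hn"
  shows "\<bar>phase_deriv c m L h j x - alpha h j * x powr (c - real j - real k0)\<bar>
           \<le> \<bar>alpha h j\<bar> * x powr (c - real j - real k0) / 2"
proof -
  let ?b = "c - real j - real k0"
  have "hn \<ge> 0"
    using h[rule_format, of 0] by (simp add: L_def)
  have "error_factor j * hn / x \<le> error_factor j * N powr eta / N"
    using x N hn \<open>hn \<ge> 0\<close> error_factor_nonneg[of j]
    by (intro order.trans[OF divide_left_mono divide_right_mono] mult_left_mono) auto
  also have "\<dots> = error_factor j / N powr (1 - eta)"
    using N by (simp add: powr_diff)
  also have "\<dots> \<le> lead_factor j / 2"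
    using large lead_factor_pos[of j] N by (simp add: field_simps)
  also have "\<dots> \<le> \<bar>alpha h j\<bar> / 2"
    using abs_alpha_ge[OF moments(2)] by simp
  finally have coefficient: "error_factor j * hn / x \<le> \<bar>alpha h j\<bar> / 2" .
  have "\<bar>phase_deriv c m L h j x - alpha h j * x powr ?b\<bar> \<le> error_factor j * hn * x powr (?b - 1)"
    using x N moments(1) j h by (intro phase_deriv_expansion) auto
  also have "\<dots> = error_factor j * hn / x * x powr ?b"
    using x N by (simp add: powr_diff)
  also have "\<dots> \<le> \<bar>alpha h j\<bar> / 2 * x powr ?b"
    using coefficient by (rule mult_right_mono) simp
  finally show ?thesis
    by simp
qed

end

context vdc_exponent
begin

definition "eps = 1 - frac c - (2 ^ (q + 1) - 1) * eta"

lemma eps_pos: "eps > 0"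
proof -
  have "(2::real) ^ (q + 1) \<le> 2 ^ (k + 1)"
    by (intro power_increasing) (auto simp: q_def)
  then have "((2::real) ^ (q + 1) - 1) * eta \<le> (2 ^ (k + 1) - 1) * eta"
    using eta_pos by (intro mult_right_mono) auto
  then show ?thesis
    using two_pow_mult_eta_lt_1_minus_frac by (simp add: eps_def)
qed

definition large :: "real \<Rightarrow> bool" where
  "large N \<longleftrightarrow> N \<ge> 1 \<and>
     2 * error_factor (q + 1) / lead_factor (q + 1) \<le> N powr (1 - eta) \<and>
     2 * error_factor (q + 2) / lead_factor (q + 2) \<le> N powr (1 - eta) \<and>
     3 * lead_factor (q + 1) * (real L * real L ^ k0) \<le> N powr eps"

lemma eventually_large: "eventually (\<lambda>N. large (real N)) sequentially"
  unfolding large_def using eta_lt_1 eps_pos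
  by (intro eventually_conj eventually_le_powr_sequentially) (auto simp: eventually_sequentially)

definition "shift_bound N j = \<lfloor>N powr (2 ^ (j + 1) * eta)\<rfloor>"

text \<open>Each differencing step loses a factor \<open>8\<close> (see \<open>van_der_corput_step_bound\<close>); the term
  \<open>8 / lead_factor (q + 1)\<close> absorbs the Kusmin--Landau bound at the last step.\<close>

definition "vdc_const j = 8 ^ (q - j) * (8 / lead_factor (q + 1) + 1)"

lemma vdc_const_ge_1: "vdc_const j \<ge> 1"
proof -
  have "(1::real) \<le> 8 ^ (q - j)" "1 \<le> 8 / lead_factor (q + 1) + 1"
    using lead_factor_pos[of "q + 1"] by auto
  then show ?thesis
    unfolding vdc_const_def using mult_mono[of 1 "8 ^ (q - j)" 1] by fastforce
qed

end

lemma sum_two_power_Suc: "(\<Sum>j<n. (2::real) ^ (j + 1)) = 2 ^ (n + 1) - 2"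
  by (induction n) auto

lemma mult_nonneg_if_near:
  fixes a f Y :: real
  assumes "Y \<ge> 0" "\<bar>f - a * Y\<bar> \<le> \<bar>a\<bar> * Y / 2"
  shows "0 \<le> a * f"
proof -
  have "\<bar>a\<bar> * \<bar>f - a * Y\<bar> \<le> \<bar>a\<bar> * (\<bar>a\<bar> * Y / 2)"
    using assms by (intro mult_left_mono) auto
  moreover have "\<bar>a\<bar> * (\<bar>a\<bar> * Y / 2) = a * a * Y / 2"
    by (simp add: abs_mult_self_eq flip: mult.assoc)
  moreover have "- (a * (f - a * Y)) \<le> \<bar>a\<bar> * \<bar>f - a * Y\<bar>"
    by (metis abs_ge_minus_self abs_mult)
  moreover have "a * f = a * a * Y + a * (f - a * Y)" "0 \<le> a * a * Y"
    using assms by (simp_all add: algebra_simps)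
  ultimately show ?thesis
    by linarith
qed

locale vdc_sum = vdc_exponent +
  fixes N :: nat and h :: "nat \<Rightarrow> int" and hn :: real
  assumes large_N: "large (real N)"
    and moments_below: "\<forall>i<k0. moment L h i = 0" and moment_k0: "moment L h k0 \<noteq> 0"
    and h_bound: "\<forall>l<L. \<bar>real_of_int (h l)\<bar> \<le> hn" and hn_le: "hn \<le> real N powr eta"
begin

lemma N_ge_1: "real N \<ge> 1"
  using large_N by (simp add: large_def)

lemma hn_nonneg: "hn \<ge> 0"
  using h_bound by (auto simp: L_def)

lemma phase_deriv_near_leading_q:
  assumes "real N \<le> y" "i \<in> {1, 2}"
  shows "\<bar>phase_deriv c m L h (q + i) y - alpha h (q + i) * y powr (frac c - real i)\<bar>
           \<le> \<bar>alpha h (q + i)\<bar> * y powr (frac c - real i) / 2"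
proof -
  have "\<bar>phase_deriv c m L h (q + i) y - alpha h (q + i) * y powr (c - real (q + i) - real k0)\<bar>
           \<le> \<bar>alpha h (q + i)\<bar> * y powr (c - real (q + i) - real k0) / 2"
    using assms large_N N_ge_1 hn_le moments_below moment_k0 h_bound
    by (intro phase_deriv_near_leading[where N = "real N"]) (auto simp: large_def)
  then show ?thesis
    unfolding exponent_q_plus .
qed

definition "\<sigma> = sgn (alpha h (q + 1))"

lemma sigma_mult_alpha: "\<sigma> * alpha h (q + 1) = \<bar>alpha h (q + 1)\<bar>" and abs_sigma: "\<bar>\<sigma>\<bar> = 1"
proof -
  have "alpha h (q + 1) \<noteq> 0"
    using abs_alpha_ge[OF moment_k0, of "q + 1"] lead_factor_pos[of "q + 1"] by auto
  then show "\<sigma> * alpha h (q + 1) = \<bar>alpha h (q + 1)\<bar>" "\<bar>\<sigma>\<bar> = 1"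
    by (auto simp: \<sigma>_def sgn_if)
qed

definition "lo = lead_factor (q + 1) * 2 powr (frac c - 1) * real N powr (frac c - 1) / 2"

definition "hi = 3 / 2 * (lead_factor (q + 1) * (real L * real L ^ k0 * hn)) * real N powr (frac c - 1)"

lemma lo_pos: "lo > 0"
  using lead_factor_pos N_ge_1 by (simp add: lo_def)

lemma hi_nonneg: "hi \<ge> 0"
  unfolding hi_def using lead_factor_pos[of "q + 1"] hn_nonneg by (intro mult_nonneg_nonneg) auto

lemma phase_deriv_first_bounds:
  assumes y: "real N \<le> y" "y \<le> 2 * real N"
  shows "lo \<le> \<sigma> * phase_deriv c m L h (q + 1) y \<and> \<sigma> * phase_deriv c m L h (q + 1) y \<le> hi"
proof -
  let ?a = "alpha h (q + 1)" and ?F = "phase_deriv c m L h (q + 1) y" and ?b = "frac c - 1"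
  have "\<bar>?F - ?a * y powr ?b\<bar> \<le> \<bar>?a\<bar> * y powr ?b / 2"
    using phase_deriv_near_leading_q[OF y(1), of 1] by simp
  then have "\<bar>\<sigma> * (?F - ?a * y powr ?b)\<bar> \<le> \<bar>?a\<bar> * y powr ?b / 2"
    using abs_sigma by (simp add: abs_mult)
  moreover have "\<sigma> * ?F = \<bar>?a\<bar> * y powr ?b + \<sigma> * (?F - ?a * y powr ?b)"
    using sigma_mult_alpha by (simp add: algebra_simps)
  ultimately have F_bounds: "\<bar>?a\<bar> * y powr ?b / 2 \<le> \<sigma> * ?F" "\<sigma> * ?F \<le> 3 / 2 * (\<bar>?a\<bar> * y powr ?b)"
    unfolding abs_le_iff by linarith+
  have y_pos: "y > 0"
    using y N_ge_1 by simp
  have "?b \<le> 0"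
    using frac_c_lt_1 by simp
  then have "(2 * real N) powr ?b \<le> y powr ?b" "y powr ?b \<le> real N powr ?b"
    using y N_ge_1 by (auto intro!: powr_mono2')
  then have y_powr: "2 powr ?b * real N powr ?b \<le> y powr ?b" "y powr ?b \<le> real N powr ?b"
    by (simp_all add: powr_mult)
  have "lo \<le> \<bar>?a\<bar> * y powr ?b / 2"
    unfolding lo_def using abs_alpha_ge[OF moment_k0, of "q + 1"] lead_factor_pos[of "q + 1"] y_powr(1)
    by (simp add: mult.assoc mult_mono divide_right_mono)
  moreover have "\<bar>?a\<bar> * y powr ?b \<le> (lead_factor (q + 1) * (real L * real L ^ k0 * hn)) * real N powr ?b"
    using abs_alpha_le[OF h_bound, of "q + 1"] y_powr(2) by (intro mult_mono) auto
  then have "3 / 2 * (\<bar>?a\<bar> * y powr ?b) \<le> hi"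
    unfolding hi_def by (simp add: mult_ac)
  ultimately show ?thesis
    using F_bounds by linarith
qed

lemma phase_deriv_second_sign:
  "(\<forall>y. real N \<le> y \<longrightarrow> y \<le> 2 * real N \<longrightarrow> 0 \<le> \<sigma> * phase_deriv c m L h (q + 2) y) \<or>
   (\<forall>y. real N \<le> y \<longrightarrow> y \<le> 2 * real N \<longrightarrow> \<sigma> * phase_deriv c m L h (q + 2) y \<le> 0)"
proof -
  let ?a = "alpha h (q + 2)"
  have same_sign: "0 \<le> ?a * phase_deriv c m L h (q + 2) y" if "real N \<le> y" for y
    using phase_deriv_near_leading_q[OF that, of 2] by (intro mult_nonneg_if_near) auto
  have "?a \<noteq> 0"
    using abs_alpha_ge[OF moment_k0, of "q + 2"] lead_factor_pos[of "q + 2"] by auto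
  then have "(\<forall>y. real N \<le> y \<longrightarrow> 0 \<le> phase_deriv c m L h (q + 2) y) \<or>
      (\<forall>y. real N \<le> y \<longrightarrow> phase_deriv c m L h (q + 2) y \<le> 0)"
    using same_sign by (cases "?a > 0") (auto simp: zero_le_mult_iff)
  then show ?thesis
    using abs_sigma by (cases "\<sigma> = 1") (auto simp: abs_if split: if_splits)
qed

lemma shift_bound_ge:
  "real N powr (2 ^ (j + 1) * eta) / 2 \<le> shift_bound (real N) j" "shift_bound (real N) j \<ge> 1"
proof -
  have "real N powr (2 ^ (j + 1) * eta) \<ge> 1"
    using N_ge_1 eta_pos by (intro ge_one_powr_ge_zero) auto
  then show "real N powr (2 ^ (j + 1) * eta) / 2 \<le> shift_bound (real N) j" "shift_bound (real N) j \<ge> 1"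
    unfolding shift_bound_def by (auto dest: floor_ge_half)
qed

lemma shift_bound_le: "shift_bound (real N) j \<le> real N powr (2 ^ (j + 1) * eta)"
  by (simp add: shift_bound_def)

lemma prod_list_shifts_le:
  assumes "shifts_below (shift_bound (real N)) rs" "length rs = q"
  shows "real (prod_list rs) \<le> real N powr ((2 ^ (q + 1) - 2) * eta)"
proof -
  have "real (prod_list rs) \<le> (\<Prod>j<q. real_of_int (shift_bound (real N) j))"
    using prod_list_shifts_below_le[OF assms(1)] assms(2) by simp
  also have "\<dots> \<le> (\<Prod>j<q. real N powr (2 ^ (j + 1) * eta))"
    using shift_bound_ge(2) shift_bound_le by (intro prod_mono) (auto intro: order.trans[OF zero_le_one])
  also have "\<dots> = real N powr (\<Sum>j<q. 2 ^ (j + 1) * eta)"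
    using N_ge_1 by (simp add: powr_sum)
  also have "(\<Sum>j<q. (2::real) ^ (j + 1) * eta) = (2 ^ (q + 1) - 2) * eta"
    using sum_two_power_Suc[of q] by (simp add: sum_distrib_right[symmetric])
  finally show ?thesis .
qed

text \<open>This is where \<open>hn \<le> N powr eta\<close> and the choice of \<open>eta\<close> enter: the first derivative of the
  \<open>q\<close>-fold differenced phase stays below \<open>1/2\<close>.\<close>

lemma prod_bound_mult_hi_le: "real N powr ((2 ^ (q + 1) - 2) * eta) * hi \<le> 1 / 2"
proof -
  let ?P = "real N powr ((2 ^ (q + 1) - 2) * eta)" and ?Z = "lead_factor (q + 1) * (real L * real L ^ k0)"
  have "?P * hi \<le> ?P * (3 / 2 * (lead_factor (q + 1) * (real L * real L ^ k0 * real N powr eta))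
      * real N powr (frac c - 1))"
    unfolding hi_def using hn_le lead_factor_pos[of "q + 1"]
    by (intro mult_left_mono mult_right_mono) auto
  also have "\<dots> = 3 / 2 * ?Z * (?P * real N powr eta * real N powr (frac c - 1))"
    by (simp add: mult_ac)
  also have "?P * real N powr eta * real N powr (frac c - 1) = real N powr (- eps)"
    using N_ge_1 by (simp add: eps_def algebra_simps flip: powr_add)
  also have "3 / 2 * ?Z * real N powr (- eps) \<le> 1 / 2"
  proof -
    have "3 * ?Z * real N powr (- eps) \<le> real N powr eps * real N powr (- eps)"
      using large_N by (intro mult_right_mono) (auto simp: large_def mult.assoc)
    also have "\<dots> = 1"
      using N_ge_1 by (simp flip: powr_add)
    finally show ?thesis
      by (simp add: mult_ac)
  qed
  finally show ?thesis .
qed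

definition "vdc_bound j = vdc_const j * real N powr (1 - 2 ^ j * eta)"

lemma vdc_bound_nonneg: "vdc_bound j \<ge> 0"
  using vdc_const_ge_1[of j] by (simp add: vdc_bound_def)

lemma two_div_lo_le: "2 / lo \<le> vdc_bound q"
proof -
  have "2 powr (-1) \<le> 2 powr (frac c - 1)"
    using frac_c_pos by (intro powr_mono) auto
  then have "lead_factor (q + 1) * (1/2) \<le> lead_factor (q + 1) * 2 powr (frac c - 1)"
    using lead_factor_pos[of "q + 1"] by (intro mult_left_mono) (auto simp: powr_minus)
  then have "4 / (lead_factor (q + 1) * 2 powr (frac c - 1)) \<le> 8 / lead_factor (q + 1)"
    using lead_factor_pos[of "q + 1"] by (auto simp: field_simps)
  also have "\<dots> \<le> vdc_const q"
    by (simp add: vdc_const_def)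
  finally have "4 / (lead_factor (q + 1) * 2 powr (frac c - 1)) * real N powr (1 - frac c)
      \<le> vdc_const q * real N powr (1 - 2 ^ q * eta)"
    using two_pow_mult_eta_le_frac[of q] N_ge_1 vdc_const_ge_1[of q]
    by (intro mult_mono powr_mono) (auto simp: q_def)
  moreover have "2 / lo = 4 / (lead_factor (q + 1) * 2 powr (frac c - 1)) * real N powr (1 - frac c)"
    using N_ge_1 by (simp add: lo_def field_simps powr_diff)
  ultimately show ?thesis
    by (simp add: vdc_bound_def)
qed

lemma differenced_sum_bound:
  assumes "length rs = q" "shifts_below (shift_bound (real N)) rs"
  shows "norm (\<Sum>n\<in>{int N..<int N + int N - int (sum_list rs)}.
           e (iter_diff rs (\<lambda>n. phase_deriv c m L h 0 (of_int n)) n)) \<le> vdc_bound q"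
proof -
  define F where "F j y = \<sigma> * phase_deriv c m L h j y" for j y
  have "norm (\<Sum>n\<in>{int N..<int N + int N - int (sum_list rs)}. e (iter_diff rs (\<lambda>n. F 0 (of_int n)) n))
      \<le> 2 / lo"
  proof (rule kusmin_landau_iter_diff)
    show "(F j has_real_derivative F (Suc j) y) (at y)" if "y > 0" for j y
      unfolding F_def[abs_def] using has_real_derivative_phase_deriv[OF that] by (rule DERIV_cmult)
    show "real (prod_list rs) * hi \<le> 1 / 2"
      using prod_list_shifts_le[OF assms(2,1)] prod_bound_mult_hi_le hi_nonneg
      by (meson mult_right_mono order_trans)
  qed (use assms N_ge_1 lo_pos phase_deriv_first_bounds phase_deriv_second_sign prod_list_shifts_below_ge_1
      in \<open>auto simp: F_def\<close>)
  moreover have "iter_diff rs (\<lambda>n. F 0 (of_int n)) n = \<sigma> * iter_diff rs (\<lambda>n. phase_deriv c m L h 0 (of_int n)) n"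
    for n
    unfolding F_def by (rule iter_diff_cmult)
  moreover have "\<sigma> = 1 \<or> \<sigma> = -1"
    using abs_sigma by (auto simp: abs_if split: if_splits)
  ultimately show ?thesis
    using two_div_lo_le norm_sum_e_uminus[of "iter_diff rs (\<lambda>n. phase_deriv c m L h 0 (of_int n))"]
    by auto
qed

lemma vdc_bound_step:
  assumes "j < q"
  shows "(real N + shift_bound (real N) j - 1) / shift_bound (real N) j *
           (real N + 2 * (shift_bound (real N) j - 1) * vdc_bound (Suc j)) \<le> (vdc_bound j)\<^sup>2"
proof -
  define \<theta> where "\<theta> = 2 ^ (j + 1) * eta"
  have "\<theta> \<le> frac c"
    unfolding \<theta>_def using assms by (intro two_pow_mult_eta_le_frac) (auto simp: q_def)
  then have \<theta>: "0 \<le> \<theta>" "\<theta> \<le> 1"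
    using eta_pos frac_c_lt_1 by (auto simp: \<theta>_def)
  have "vdc_const j = 8 * vdc_const (Suc j)"
    using assms by (simp add: vdc_const_def Suc_diff_Suc flip: power_Suc)
  then have "vdc_bound (Suc j) = vdc_const (Suc j) * real N powr (1 - \<theta>)"
    "vdc_bound j = 8 * vdc_const (Suc j) * real N powr (1 - \<theta> / 2)"
    by (simp_all add: vdc_bound_def \<theta>_def)
  then show ?thesis
    using van_der_corput_step_bound[OF N_ge_1 \<theta> _ _ _ vdc_const_ge_1] shift_bound_ge shift_bound_le
    by (simp add: \<theta>_def)
qed

theorem exp_sum_bound_large:
  "norm (\<Sum>n\<in>{int N..<int N + int N}. e (phase_deriv c m L h 0 (of_int n))) \<le> vdc_const 0 * real N powr (1 - eta)"
proof -
  have "norm (\<Sum>n\<in>{int N..<int N + int N}. e (phase_deriv c m L h 0 (of_int n))) \<le> vdc_bound 0"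
    using differenced_sum_bound shift_bound_ge(2) vdc_bound_step vdc_bound_nonneg
    by (intro van_der_corput_iterated[where G = "shift_bound (real N)" and N = "real N"]) auto
  then show ?thesis
    by (simp add: vdc_bound_def)
qed

end

lemma le_mult_powr_if_small:
  fixes N C hn \<eta> :: real
  assumes "N \<ge> 1" "C \<ge> 1" "hn \<ge> 1" "\<eta> \<le> 1" and "N \<le> C \<or> N powr \<eta> \<le> hn"
  shows "N \<le> C * hn * N powr (1 - \<eta>)"
proof -
  have powr: "N powr (1 - \<eta>) \<ge> 1"
    using assms by (intro ge_one_powr_ge_zero) auto
  have "C * hn * N powr (1 - \<eta>) \<ge> C" "C * hn * N powr (1 - \<eta>) \<ge> hn * N powr (1 - \<eta>)"
    using assms powr mult_mono[of 1 C 1 "hn * N powr (1 - \<eta>)"] mult_mono[of 1 hn 1 "N powr (1 - \<eta>)"]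
    by (simp_all add: mult.assoc)
  moreover have "N = N powr \<eta> * N powr (1 - \<eta>)"
    using assms by (simp flip: powr_add)
  then have "N powr \<eta> \<le> hn \<Longrightarrow> N \<le> hn * N powr (1 - \<eta>)"
    using powr by (metis mult_right_mono order_trans zero_le_one)
  ultimately show ?thesis
    using assms(5) by linarith
qed

lemma sum_e_phase_deriv_0:
  "(\<Sum>n\<in>{N..<2*N}. e (1 / real m * (\<Sum>l<L. real_of_int (h l) * real (n + l) powr c)))
     = (\<Sum>n\<in>{int N..<int N + int N}. e (phase_deriv c m L h 0 (of_int n)))"
proof -
  have "{int N..<int N + int N} = int ` {N..<2*N}"
    by (simp add: image_int_atLeastLessThan)
  then show ?thesis
    by (simp add: sum.reindex phase_deriv_def)
qed

lemma ex_nonzero_if_moment_nonzero: "moment L h i \<noteq> 0 \<Longrightarrow> \<exists>l<L. h l \<noteq> 0"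
  by (metis (no_types, lifting) lessThan_iff moment_def mult_eq_0_iff sum.neutral)

context vdc_exponent
begin

theorem exp_sum_bound:
  "\<exists>C>0. \<forall>(N::nat) h. N > 0 \<longrightarrow> (\<forall>i<k0. moment L h i = 0) \<longrightarrow> moment L h k0 \<noteq> 0 \<longrightarrow>
     norm (\<Sum>n\<in>{N..<2*N}. e (1 / real m * (\<Sum>l<L. real_of_int (h l) * real (n + l) powr c)))
       \<le> C * sup_norm L h * real N powr (1 - eta)"
proof -
  obtain N0 where N0: "\<And>N. N \<ge> N0 \<Longrightarrow> large (real N)"
    using eventually_large by (auto simp: eventually_sequentially)
  define C where "C = vdc_const 0 + real N0"
  have C: "C \<ge> 1" "C \<ge> vdc_const 0" "C \<ge> real N0"
    using vdc_const_ge_1[of 0] by (auto simp: C_def)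
  show ?thesis
  proof (intro exI[of _ C] conjI allI impI)
    fix N :: nat and h :: "nat \<Rightarrow> int"
    assume N: "N > 0" and moments: "\<forall>i<k0. moment L h i = 0" "moment L h k0 \<noteq> 0"
    define hn where "hn = sup_norm L h"
    have hn: "hn \<ge> 1"
      unfolding hn_def using moments(2) by (intro sup_norm_ge_1 ex_nonzero_if_moment_nonzero)
    let ?S = "\<Sum>n\<in>{int N..<int N + int N}. e (phase_deriv c m L h 0 (of_int n))"
    consider "N < N0 \<or> hn > real N powr eta" | "N \<ge> N0" "hn \<le> real N powr eta"
      by linarith
    then have "norm ?S \<le> C * hn * real N powr (1 - eta)"
    proof cases
      case 1
      then have "real N \<le> C * hn * real N powr (1 - eta)"
        using N C hn eta_lt_1 by (intro le_mult_powr_if_small) auto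
      moreover have "norm ?S \<le> real N"
        using norm_sum_e_le_card[of "\<lambda>n. phase_deriv c m L h 0 (of_int n)" "{int N..<int N + int N}"]
        by simp
      ultimately show ?thesis
        by linarith
    next
      case 2
      interpret vdc_sum c m k0 N h hn
        using 2 N0 moments abs_le_sup_norm by unfold_locales (auto simp: hn_def)
      have "C * 1 \<le> C * hn"
        using C(1) hn by (intro mult_left_mono) auto
      then have "vdc_const 0 \<le> C * hn"
        using C(2) by simp
      then show ?thesis
        using exp_sum_bound_large by (smt (verit) mult_right_mono powr_ge_zero)
    qed
    then show "norm (\<Sum>n\<in>{N..<2*N}. e (1 / real m * (\<Sum>l<L. real_of_int (h l) * real (n + l) powr c)))
        \<le> C * sup_norm L h * real N powr (1 - eta)"
      unfolding sum_e_phase_deriv_0 by (simp add: hn_def)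
  qed (use C in simp)
qed

end

lemma ex_uniform_constant_atMost:
  fixes P :: "nat \<Rightarrow> real \<Rightarrow> bool"
  assumes "\<And>i. i \<le> n \<Longrightarrow> \<exists>C>0. P i C" and mono: "\<And>i C C'. P i C \<Longrightarrow> C \<le> C' \<Longrightarrow> P i C'"
  shows "\<exists>C>0. \<forall>i\<le>n. P i C"
  using assms(1)
proof (induction n)
  case (Suc n)
  then obtain C1 C2 where "C1 > 0" "\<forall>i\<le>n. P i C1" "C2 > 0" "P (Suc n) C2"
    by (meson le_SucI order_refl)
  then show ?case
    using mono by (intro exI[of _ "max C1 C2"]) (auto simp: le_Suc_eq)
qed auto

lemma exp_sum_bound_uniform:
  fixes c :: real and m :: nat
  assumes "c > 1" and "c \<notin> \<int>" and "m > 0"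
  defines "L \<equiv> nat \<lfloor>c\<rfloor> + 1"
  shows "\<exists>C>0. \<forall>k0\<le>nat \<lfloor>c\<rfloor>. \<forall>(N::nat) h. N > 0 \<longrightarrow> (\<forall>i<k0. moment L h i = 0) \<longrightarrow> moment L h k0 \<noteq> 0 \<longrightarrow>
           norm (\<Sum>n\<in>{N..<2*N}. e (1 / real m * (\<Sum>l<L. real_of_int (h l) * real (n + l) powr c)))
             \<le> C * sup_norm L h * real N powr (1 - dist_int c / 2 powr (c + 1))"
proof (rule ex_uniform_constant_atMost)
  fix k0 assume "k0 \<le> nat \<lfloor>c\<rfloor>"
  then have vdc: "vdc_exponent c m k0"
    using assms(1-3) by unfold_locales
  show "\<exists>C>0. \<forall>(N::nat) h. N > 0 \<longrightarrow> (\<forall>i<k0. moment L h i = 0) \<longrightarrow> moment L h k0 \<noteq> 0 \<longrightarrow>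
           norm (\<Sum>n\<in>{N..<2*N}. e (1 / real m * (\<Sum>l<L. real_of_int (h l) * real (n + l) powr c)))
             \<le> C * sup_norm L h * real N powr (1 - dist_int c / 2 powr (c + 1))"
    using vdc_exponent.exp_sum_bound[OF vdc]
    by (simp add: L_def vdc_exponent.L_def[OF vdc] vdc_exponent.k_def[OF vdc] vdc_exponent.eta_def[OF vdc])
next
  fix k0 C C'
  assume bound: "\<forall>(N::nat) h. N > 0 \<longrightarrow> (\<forall>i<k0. moment L h i = 0) \<longrightarrow> moment L h k0 \<noteq> 0 \<longrightarrow>
           norm (\<Sum>n\<in>{N..<2*N}. e (1 / real m * (\<Sum>l<L. real_of_int (h l) * real (n + l) powr c)))
             \<le> C * sup_norm L h * real N powr (1 - dist_int c / 2 powr (c + 1))" and "C \<le> C'"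
  have "C * sup_norm L h * real N powr \<epsilon> \<le> C' * sup_norm L h * real N powr \<epsilon>" for h and N :: nat and \<epsilon>
    using \<open>C \<le> C'\<close> sup_norm_nonneg[of L h] by (intro mult_right_mono) auto
  then show "\<forall>(N::nat) h. N > 0 \<longrightarrow> (\<forall>i<k0. moment L h i = 0) \<longrightarrow> moment L h k0 \<noteq> 0 \<longrightarrow>
           norm (\<Sum>n\<in>{N..<2*N}. e (1 / real m * (\<Sum>l<L. real_of_int (h l) * real (n + l) powr c)))
             \<le> C' * sup_norm L h * real N powr (1 - dist_int c / 2 powr (c + 1))"
    using bound by (meson order_trans)
qed

lemma ex_least_nonzero_moment:
  assumes "\<exists>l<L. h l \<noteq> 0"
  obtains k0 where "k0 < L" "\<forall>i<k0. moment L h i = 0" "moment L h k0 \<noteq> 0"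
proof -
  obtain i where i: "i < L" "moment L h i \<noteq> 0"
    using moment_nonzero[OF assms] by blast
  define k0 where "k0 = (LEAST i. moment L h i \<noteq> 0)"
  have "k0 \<le> i" "moment L h k0 \<noteq> 0"
    unfolding k0_def using i(2) by (rule Least_le, rule LeastI)
  moreover have "\<forall>i<k0. moment L h i = 0"
    unfolding k0_def using not_less_Least by blast
  ultimately show ?thesis
    using i(1) that[of k0] by simp
qed

theorem proposition2:
  fixes c :: real and m :: nat
  assumes "c > 1" and "c \<notin> \<int>" and "m > 0"
  defines "L \<equiv> nat \<lfloor>c\<rfloor> + 1"
  shows "\<exists>C>0. \<exists>\<delta>>0. \<forall>N::nat. \<forall>h::nat \<Rightarrow> int.
           N > 0 \<longrightarrow> (\<exists>l<L. h l \<noteq> 0) \<longrightarrow>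
           sup_norm L h \<le> \<delta> * real N powr (1 - frac c) \<longrightarrow>
           norm (\<Sum>n\<in>{N..<2*N}. e ((1 / real m) * (\<Sum>l<L. real_of_int (h l) * real (n + l) powr c)))
             \<le> C * sup_norm L h * real N powr (1 - dist_int c / 2 powr (c + 1))"
proof -
  obtain C where C: "C > 0" "\<forall>k0\<le>nat \<lfloor>c\<rfloor>. \<forall>(N::nat) h. N > 0 \<longrightarrow> (\<forall>i<k0. moment L h i = 0) \<longrightarrow>
      moment L h k0 \<noteq> 0 \<longrightarrow>
      norm (\<Sum>n\<in>{N..<2*N}. e (1 / real m * (\<Sum>l<L. real_of_int (h l) * real (n + l) powr c)))
        \<le> C * sup_norm L h * real N powr (1 - dist_int c / 2 powr (c + 1))"
    using exp_sum_bound_uniform[OF assms(1-3)] unfolding L_def by blast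
  show ?thesis
  proof (intro exI[of _ C] exI[of _ 1] conjI allI impI C(1) zero_less_one)
    fix N :: nat and h :: "nat \<Rightarrow> int"
    assume "N > 0" and "\<exists>l<L. h l \<noteq> 0"
    then obtain k0 where "k0 < L" "\<forall>i<k0. moment L h i = 0" "moment L h k0 \<noteq> 0"
      using ex_least_nonzero_moment by blast
    moreover from \<open>k0 < L\<close> have "k0 \<le> nat \<lfloor>c\<rfloor>"
      by (simp add: L_def)
    ultimately show "norm (\<Sum>n\<in>{N..<2*N}. e (1 / real m * (\<Sum>l<L. real_of_int (h l) * real (n + l) powr c)))
        \<le> C * sup_norm L h * real N powr (1 - dist_int c / 2 powr (c + 1))"
      using C(2) \<open>N > 0\<close> by blast
  qed
qed

end
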